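(* Let $L_h,L_m,L_s,n_m,n_h$ be positive integers, $\mathbf{Y}_h\in\mathbb{R}^{L_h\times n_h}$, $\mathbf{Y}_m\in\mathbb{R}^{L_m\times n_m}$, $\mathbf{B}\in\mathbb{R}^{n_m\times n_m}$ (a cyclic spatial low-pass filter), $\mathbf{M}\in\mathbb{R}^{n_m\times n_h}$ (a spatial subsampling operator), $\mathbf{R}\in\mathbb{R}^{L_m\times L_h}$, $\mathbf{E}\in\mathbb{R}^{L_h\times L_s}$, and $\rho,\lambda,\tau>0$. Let $\mathbf{W}\in\mathbb{R}^{n_m\times n_m}$ be the scene-adapted GMM denoiser matrix $\mathbf{W}=\frac1{n_p}\sum_{i=1}^N\mathbf{P}_i^T\mathbf{F}_i\mathbf{P}_i$, $\mathbf{F}_i=\sum_{j=1}^K\beta_j^i\mathbf{C}_j(\mathbf{C}_j+\sigma^2\mathbf{I})^{-1}$, with $\sigma^2=\tau/\rho$, where $\mathbf{P}_i\in\{0,1\}^{n_p\times n_m}$ extracts the $i$-th of the $N$ patches of $n_p$ pixels (unit stride, periodic boundaries), $\mathbf{C}_1,\dots,\mathbf{C}_K$ are symmetric positive semi-definite $n_p\times n_p$ matrices and $\beta_j^i\ge0$, $\sum_j\beta_j^i=1$ for each $i$. Starting from $\mathbf{V}_1^{(0)}=\mathbf{V}_2^{(0)}=\mathbf{V}_3^{(0)}=\mathbf{D}_1^{(0)}=\mathbf{D}_2^{(0)}=\mathbf{D}_3^{(0)}=0$, consider the iteration (Algorithm 1, PnP-SALSA for hyperspectral sharpening), for $k=0,1,\dots$: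 $\mathbf{X}^{(k+1)}=\arg\min_{\mathbf{X}}\|\mathbf{X}\mathbf{B}-\mathbf{V}_1^{(k)}-\mathbf{D}_1^{(k)}\|_F^2+\|\mathbf{X}-\mathbf{V}_2^{(k)}-\mathbf{D}_2^{(k)}\|_F^2+\|\mathbf{X}-\mathbf{V}_3^{(k)}-\mathbf{D}_3^{(k)}\|_F^2$; $\mathbf{V}_1^{(k+1)}=\arg\min_{\mathbf{V}_1}\|\mathbf{E}\mathbf{V}_1\mathbf{M}-\mathbf{Y}_h\|_F^2+\rho\|\mathbf{X}^{(k+1)}\mathbf{B}-\mathbf{V}_1-\mathbf{D}_1^{(k)}\|_F^2$; $\mathbf{V}_2^{(k+1)}=\arg\min_{\mathbf{V}_2}\lambda\|\mathbf{R}\mathbf{E}\mathbf{V}_2-\mathbf{Y}_m\|_F^2+\rho\|\mathbf{X}^{(k+1)}-\mathbf{V}_2-\mathbf{D}_2^{(k)}\|_F^2$; $\mathbf{V}_3^{(k+1)}=$ the result of applying $\mathbf{W}$ to each of the $L_s$ rows (coefficient images) of $\mathbf{X}^{(k+1)}-\mathbf{D}_3^{(k)}$; $\mathbf{D}_1^{(k+1)}=\mathbf{D}_1^{(k)}-(\mathbf{X}^{(k+1)}\mathbf{B}-\mathbf{V}_1^{(k+1)})$, $\mathbf{D}_2^{(k+1)}=\mathbf{D}_2^{(k)}-(\mathbf{X}^{(k+1)}-\mathbf{V}_2^{(k+1)})$, $\mathbf{D}_3^{(k+1)}=\mathbf{D}_3^{(k)}-(\mathbf{X}^{(k+1)}-\mathbf{V}_3^{(k+1)})$.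 Then Algorithm 1 converges (the sequence $(\mathbf{X}^{(k)})$ converges).
   Context: This iteration is SALSA/ADMM with penalty $\rho$ applied to $\min_{\mathbf{X}\in\mathbb{R}^{L_s\times n_m}}\frac12\|\mathbf{E}\mathbf{X}\mathbf{B}\mathbf{M}-\mathbf{Y}_h\|_F^2+\frac\lambda2\|\mathbf{R}\mathbf{E}\mathbf{X}-\mathbf{Y}_m\|_F^2+\tau\phi(\mathbf{X})$, where $\phi$ is the convex function whose proximity operator is the (row-wise) linear denoiser $\mathbf{W}$; the high-resolution hyperspectral estimate is $\mathbf{E}\mathbf{X}$. $\|\cdot\|_F$ is the Frobenius norm. *)

theory Defs
  imports Complex_Main "Jordan_Normal_Form.Matrix"
begin

definition frob_norm :: "real mat \<Rightarrow> real" where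
  "frob_norm A = sqrt (\<Sum>i<dim_row A. \<Sum>j<dim_col A. (A $$ (i,j))\<^sup>2)"

definition psd_mat :: "nat \<Rightarrow> real mat \<Rightarrow> bool" where
  "psd_mat n C \<longleftrightarrow> C \<in> carrier_mat n n \<and> transpose_mat C = C \<and>
     (\<forall>v \<in> carrier_vec n. 0 \<le> v \<bullet> (C *\<^sub>v v))"

definition inv_mat :: "nat \<Rightarrow> real mat \<Rightarrow> real mat" where
  "inv_mat n A = (SOME Bi. Bi \<in> carrier_mat n n \<and> A * Bi = 1\<^sub>m n \<and> Bi * A = 1\<^sub>m n)"

definition msum :: "nat \<Rightarrow> nat \<Rightarrow> ('i \<Rightarrow> real mat) \<Rightarrow> 'i set \<Rightarrow> real mat" where
  "msum n m f S = mat n m (\<lambda>(a,b). \<Sum>x\<in>S. f x $$ (a,b))"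

definition pix :: "nat \<Rightarrow> nat \<Rightarrow> nat \<Rightarrow> nat" where
  "pix w r c = r * w + c"

(* P_i: extracts the p x p patch (n_p = p*p pixels) whose top-left corner is pixel i
   of the h x w image (n_m = h*w pixels), unit stride, periodic boundaries *)
definition patch_mat :: "nat \<Rightarrow> nat \<Rightarrow> nat \<Rightarrow> nat \<Rightarrow> real mat" where
  "patch_mat h w p i = mat (p*p) (h*w)
     (\<lambda>(u,j). if j = pix w ((i div w + u div p) mod h) ((i mod w + u mod p) mod w) then 1 else 0)"

definition gmm_F :: "nat \<Rightarrow> nat \<Rightarrow> (nat \<Rightarrow> real mat) \<Rightarrow> (nat \<Rightarrow> nat \<Rightarrow> real) \<Rightarrow> real \<Rightarrow> nat \<Rightarrow> real mat" where
  "gmm_F np K C beta sigma2 i =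
     msum np np (\<lambda>j. beta j i \<cdot>\<^sub>m (C j * inv_mat np (C j + sigma2 \<cdot>\<^sub>m 1\<^sub>m np))) {..<K}"

(* W = (1/n_p) sum_{i=1}^N P_i^T F_i P_i, with N = n_m patches (one per pixel) *)
definition gmm_W :: "nat \<Rightarrow> nat \<Rightarrow> nat \<Rightarrow> nat \<Rightarrow> (nat \<Rightarrow> real mat) \<Rightarrow> (nat \<Rightarrow> nat \<Rightarrow> real) \<Rightarrow> real \<Rightarrow> real mat" where
  "gmm_W h w p K C beta sigma2 =
     (1 / real (p*p)) \<cdot>\<^sub>m msum (h*w) (h*w)
        (\<lambda>i. transpose_mat (patch_mat h w p i) * gmm_F (p*p) K C beta sigma2 i * patch_mat h w p i)
        {..<h*w}"

end

theory Submission
  imports Defs "Jordan_Normal_Form.Determinant"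
begin

definition frob_inner :: "real mat \<Rightarrow> real mat \<Rightarrow> real" where
  "frob_inner A B = (\<Sum>i<dim_row A. \<Sum>j<dim_col A. A $$ (i,j) * B $$ (i,j))"

lemma frob_norm_sq: "(frob_norm A)\<^sup>2 = frob_inner A A"
  unfolding frob_norm_def frob_inner_def
  by (subst real_sqrt_pow2) (auto intro!: sum_nonneg simp: power2_eq_square)

lemma frob_inner_commute:
  "A \<in> carrier_mat r c \<Longrightarrow> B \<in> carrier_mat r c \<Longrightarrow> frob_inner A B = frob_inner B A"
  unfolding frob_inner_def by (auto simp: mult.commute)

lemma frob_inner_add_left:
  "A \<in> carrier_mat r c \<Longrightarrow> B \<in> carrier_mat r c \<Longrightarrow> C \<in> carrier_mat r c \<Longrightarrow>
   frob_inner (A + B) C = frob_inner A C + frob_inner B C"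
  unfolding frob_inner_def by (auto simp: algebra_simps sum.distrib)

lemma frob_inner_add_right:
  "A \<in> carrier_mat r c \<Longrightarrow> B \<in> carrier_mat r c \<Longrightarrow> C \<in> carrier_mat r c \<Longrightarrow>
   frob_inner C (A + B) = frob_inner C A + frob_inner C B"
  unfolding frob_inner_def by (auto simp: algebra_simps sum.distrib)

lemma frob_inner_diff_left:
  "A \<in> carrier_mat r c \<Longrightarrow> B \<in> carrier_mat r c \<Longrightarrow> C \<in> carrier_mat r c \<Longrightarrow>
   frob_inner (A - B) C = frob_inner A C - frob_inner B C"
  unfolding frob_inner_def by (auto simp: algebra_simps sum_subtractf)

lemma frob_inner_diff_right:
  "A \<in> carrier_mat r c \<Longrightarrow> B \<in> carrier_mat r c \<Longrightarrow> C \<in> carrier_mat r c \<Longrightarrow>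
   frob_inner C (A - B) = frob_inner C A - frob_inner C B"
  unfolding frob_inner_def by (auto simp: algebra_simps sum_subtractf)

lemma frob_inner_smult_left:
  "A \<in> carrier_mat r c \<Longrightarrow> C \<in> carrier_mat r c \<Longrightarrow> frob_inner (a \<cdot>\<^sub>m A) C = a * frob_inner A C"
  unfolding frob_inner_def by (auto simp: algebra_simps sum_distrib_left)

lemma frob_inner_smult_right:
  "A \<in> carrier_mat r c \<Longrightarrow> C \<in> carrier_mat r c \<Longrightarrow> frob_inner C (a \<cdot>\<^sub>m A) = a * frob_inner C A"
  unfolding frob_inner_def by (auto simp: algebra_simps sum_distrib_left)

lemma frob_inner_zero_left: "A \<in> carrier_mat r c \<Longrightarrow> frob_inner (0\<^sub>m r c) A = 0"
  unfolding frob_inner_def by auto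

lemma frob_inner_zero_right: "A \<in> carrier_mat r c \<Longrightarrow> frob_inner A (0\<^sub>m r c) = 0"
  unfolding frob_inner_def by auto

lemma frob_inner_self_nonneg: "0 \<le> frob_inner A A"
  unfolding frob_inner_def by (auto intro!: sum_nonneg)

lemma frob_inner_diff_self:
  "A \<in> carrier_mat r c \<Longrightarrow> B \<in> carrier_mat r c \<Longrightarrow>
   frob_inner (A - B) (A - B) = frob_inner A A - 2 * frob_inner A B + frob_inner B B"
  by (simp add: frob_inner_diff_left[of _ r c] frob_inner_diff_right[of _ r c]
      frob_inner_commute[of B r c A] minus_carrier_mat)

lemma entry_sq_le_frob_inner:
  assumes "A \<in> carrier_mat r c" "i < r" "j < c"
  shows "(A $$ (i,j))\<^sup>2 \<le> frob_inner A A"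
proof -
  have "(A $$ (i,j))\<^sup>2 \<le> (\<Sum>j'<c. A $$ (i,j') * A $$ (i,j'))"
    using member_le_sum[of j "{..<c}" "\<lambda>j'. A $$ (i,j') * A $$ (i,j')"] assms
    by (auto simp: power2_eq_square)
  also have "\<dots> \<le> (\<Sum>i'<r. \<Sum>j'<c. A $$ (i',j') * A $$ (i',j'))"
    by (rule member_le_sum) (use assms in \<open>auto intro!: sum_nonneg\<close>)
  finally show ?thesis using assms unfolding frob_inner_def by auto
qed

lemma frob_inner_self_eq_0_iff:
  assumes "A \<in> carrier_mat r c"
  shows "frob_inner A A = 0 \<longleftrightarrow> A = 0\<^sub>m r c"
proof
  assume "frob_inner A A = 0"
  then have "(A $$ (i,j))\<^sup>2 \<le> 0" if "i < r" "j < c" for i j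
    using entry_sq_le_frob_inner[OF assms that] by simp
  then show "A = 0\<^sub>m r c" using assms by (intro eq_matI) auto
qed (use frob_inner_zero_left in auto)

lemma frob_inner_orthogonal_all_imp_zero:
  assumes "G \<in> carrier_mat r c" "\<And>Z. Z \<in> carrier_mat r c \<Longrightarrow> frob_inner G Z = 0"
  shows "G = 0\<^sub>m r c"
  using assms frob_inner_self_eq_0_iff[OF assms(1)] by auto

lemma frob_inner_mult_left:
  assumes P: "P \<in> carrier_mat r' r" and A: "A \<in> carrier_mat r c" and C: "C \<in> carrier_mat r' c"
  shows "frob_inner (P * A) C = frob_inner A (transpose_mat P * C)"
proof -
  have "frob_inner (P * A) C = (\<Sum>i<r'. \<Sum>j<c. \<Sum>k<r. P $$ (i,k) * A $$ (k,j) * C $$ (i,j))"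
    using P A C unfolding frob_inner_def
    by (auto simp: scalar_prod_def sum_distrib_right lessThan_atLeast0 intro!: sum.cong)
  also have "\<dots> = (\<Sum>k<r. \<Sum>j<c. \<Sum>i<r'. P $$ (i,k) * A $$ (k,j) * C $$ (i,j))"
    by (subst sum.swap) (subst (2) sum.swap, subst sum.swap, simp)
  also have "\<dots> = frob_inner A (transpose_mat P * C)"
    using P A C unfolding frob_inner_def
    by (auto simp: scalar_prod_def sum_distrib_left lessThan_atLeast0 algebra_simps intro!: sum.cong)
  finally show ?thesis .
qed

lemma frob_inner_mult_right:
  assumes Q: "Q \<in> carrier_mat c c'" and A: "A \<in> carrier_mat r c" and C: "C \<in> carrier_mat r c'"
  shows "frob_inner (A * Q) C = frob_inner A (C * transpose_mat Q)"
proof -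
  have "frob_inner (A * Q) C = (\<Sum>i<r. \<Sum>j<c'. \<Sum>k<c. A $$ (i,k) * Q $$ (k,j) * C $$ (i,j))"
    using Q A C unfolding frob_inner_def
    by (auto simp: scalar_prod_def sum_distrib_right lessThan_atLeast0 intro!: sum.cong)
  also have "\<dots> = (\<Sum>i<r. \<Sum>k<c. \<Sum>j<c'. A $$ (i,k) * Q $$ (k,j) * C $$ (i,j))"
    by (rule sum.cong[OF refl], rule sum.swap)
  also have "\<dots> = frob_inner A (C * transpose_mat Q)"
    using Q A C unfolding frob_inner_def
    by (auto simp: scalar_prod_def sum_distrib_left lessThan_atLeast0 algebra_simps intro!: sum.cong)
  finally show ?thesis .
qed

lemma frob_inner_rows:
  assumes "A \<in> carrier_mat r c" "B \<in> carrier_mat r c"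
  shows "frob_inner A B = (\<Sum>i<r. row A i \<bullet> row B i)"
  using assms unfolding frob_inner_def by (auto simp: scalar_prod_def lessThan_atLeast0 intro!: sum.cong)

definition mat_tendsto :: "(nat \<Rightarrow> real mat) \<Rightarrow> real mat \<Rightarrow> bool" where
  "mat_tendsto S A \<longleftrightarrow> (\<forall>i<dim_row A. \<forall>j<dim_col A. (\<lambda>k. S k $$ (i,j)) \<longlonglongrightarrow> A $$ (i,j))"

lemma mat_tendsto_const: "mat_tendsto (\<lambda>k. A) A"
  unfolding mat_tendsto_def by auto

lemma mat_tendsto_add:
  assumes "mat_tendsto S A" "mat_tendsto T B" "\<And>k. T k \<in> carrier_mat r c" "A \<in> carrier_mat r c"
    "B \<in> carrier_mat r c"
  shows "mat_tendsto (\<lambda>k. S k + T k) (A + B)"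
proof -
  have [simp]: "dim_row (T k) = r" "dim_col (T k) = c" for k using assms(3)[of k] by auto
  show ?thesis using assms unfolding mat_tendsto_def by (auto intro!: tendsto_add)
qed

lemma mat_tendsto_diff:
  assumes "mat_tendsto S A" "mat_tendsto T B" "\<And>k. T k \<in> carrier_mat r c" "A \<in> carrier_mat r c"
    "B \<in> carrier_mat r c"
  shows "mat_tendsto (\<lambda>k. S k - T k) (A - B)"
proof -
  have [simp]: "dim_row (T k) = r" "dim_col (T k) = c" for k using assms(3)[of k] by auto
  show ?thesis using assms unfolding mat_tendsto_def by (auto intro!: tendsto_diff)
qed

lemma mat_tendsto_smult:
  assumes "mat_tendsto S A" "\<And>k. S k \<in> carrier_mat r c" "A \<in> carrier_mat r c"
  shows "mat_tendsto (\<lambda>k. a \<cdot>\<^sub>m S k) (a \<cdot>\<^sub>m A)"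
proof -
  have [simp]: "dim_row (S k) = r" "dim_col (S k) = c" for k using assms(2)[of k] by auto
  show ?thesis using assms unfolding mat_tendsto_def by (auto intro!: tendsto_mult_left)
qed

lemma mat_tendsto_mult_left:
  assumes "mat_tendsto S A" "\<And>k. S k \<in> carrier_mat r c" "A \<in> carrier_mat r c" "P \<in> carrier_mat r' r"
  shows "mat_tendsto (\<lambda>k. P * S k) (P * A)"
  unfolding mat_tendsto_def
proof (intro allI impI)
  fix i j assume "i < dim_row (P * A)" "j < dim_col (P * A)"
  then have i: "i < r'" and j: "j < c" using assms by auto
  have "(\<lambda>k. \<Sum>m<r. P $$ (i,m) * S k $$ (m,j)) \<longlonglongrightarrow> (\<Sum>m<r. P $$ (i,m) * A $$ (m,j))"
    using assms j unfolding mat_tendsto_def by (auto intro!: tendsto_sum tendsto_mult_left)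
  moreover have "(P * S k) $$ (i, j) = (\<Sum>m<r. P $$ (i,m) * S k $$ (m,j))" for k
    using assms(2)[of k] assms(4) i j by (simp add: scalar_prod_def lessThan_atLeast0)
  ultimately show "(\<lambda>k. (P * S k) $$ (i, j)) \<longlonglongrightarrow> (P * A) $$ (i, j)"
    using assms i j by (simp add: scalar_prod_def lessThan_atLeast0)
qed

lemma mat_tendsto_mult_right:
  assumes "mat_tendsto S A" "\<And>k. S k \<in> carrier_mat r c" "A \<in> carrier_mat r c" "Q \<in> carrier_mat c c'"
  shows "mat_tendsto (\<lambda>k. S k * Q) (A * Q)"
  unfolding mat_tendsto_def
proof (intro allI impI)
  fix i j assume "i < dim_row (A * Q)" "j < dim_col (A * Q)"
  then have i: "i < r" and j: "j < c'" using assms by auto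
  have "(\<lambda>k. \<Sum>m<c. S k $$ (i,m) * Q $$ (m,j)) \<longlonglongrightarrow> (\<Sum>m<c. A $$ (i,m) * Q $$ (m,j))"
    using assms i unfolding mat_tendsto_def by (auto intro!: tendsto_sum tendsto_mult_right)
  moreover have "(S k * Q) $$ (i, j) = (\<Sum>m<c. S k $$ (i,m) * Q $$ (m,j))" for k
    using assms(2)[of k] assms(4) i j by (simp add: scalar_prod_def lessThan_atLeast0)
  ultimately show "(\<lambda>k. (S k * Q) $$ (i, j)) \<longlonglongrightarrow> (A * Q) $$ (i, j)"
    using assms i j by (simp add: scalar_prod_def lessThan_atLeast0)
qed

lemma mat_tendsto_frob_inner:
  assumes "mat_tendsto S A" "mat_tendsto T B" "\<And>k. S k \<in> carrier_mat r c" "A \<in> carrier_mat r c"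
    "B \<in> carrier_mat r c"
  shows "(\<lambda>k. frob_inner (S k) (T k)) \<longlonglongrightarrow> frob_inner A B"
proof -
  have [simp]: "dim_row (S k) = r" "dim_col (S k) = c" for k using assms(3)[of k] by auto
  show ?thesis using assms unfolding mat_tendsto_def frob_inner_def by (auto intro!: tendsto_sum tendsto_mult)
qed

lemma mat_tendsto_unique:
  assumes "mat_tendsto S A" "mat_tendsto S A'" "A \<in> carrier_mat r c" "A' \<in> carrier_mat r c"
  shows "A = A'"
proof (rule eq_matI)
  fix i j assume "i < dim_row A'" "j < dim_col A'"
  then show "A $$ (i,j) = A' $$ (i,j)"
    using assms LIMSEQ_unique[of "\<lambda>k. S k $$ (i,j)"] unfolding mat_tendsto_def by auto
qed (use assms in auto)

lemma mat_tendsto_const_iff: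
  assumes "A \<in> carrier_mat r c" "A' \<in> carrier_mat r c"
  shows "mat_tendsto (\<lambda>k. A') A \<longleftrightarrow> A = A'"
  using mat_tendsto_unique[OF _ mat_tendsto_const assms] mat_tendsto_const by blast

lemma mat_tendsto_subseq: "mat_tendsto S A \<Longrightarrow> strict_mono g \<Longrightarrow> mat_tendsto (\<lambda>k. S (g k)) A"
  unfolding mat_tendsto_def by (auto intro: LIMSEQ_subseq_LIMSEQ[unfolded comp_def])

lemma mat_tendsto_Suc_iff: "mat_tendsto (\<lambda>k. S (Suc k)) A \<longleftrightarrow> mat_tendsto S A"
proof -
  have "(\<lambda>k. S (Suc k) $$ ij) \<longlonglongrightarrow> a \<longleftrightarrow> (\<lambda>k. S k $$ ij) \<longlonglongrightarrow> a" for ij a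
    using filterlim_sequentially_Suc[of "\<lambda>k. S k $$ ij"] by simp
  then show ?thesis unfolding mat_tendsto_def by simp
qed

lemma mat_tendsto_if_frob_dist_tendsto_0:
  assumes lim: "(\<lambda>k. frob_inner (S k - A) (S k - A)) \<longlonglongrightarrow> 0"
    and S: "\<And>k. S k \<in> carrier_mat r c" and A: "A \<in> carrier_mat r c"
  shows "mat_tendsto S A"
  unfolding mat_tendsto_def
proof (intro allI impI)
  fix i j assume "i < dim_row A" "j < dim_col A"
  then have ij: "i < r" "j < c" using A by auto
  define s where "s k = sqrt (frob_inner (S k - A) (S k - A))" for k
  have dist: "\<bar>S k $$ (i,j) - A $$ (i,j)\<bar> \<le> s k" for k
    unfolding s_def using real_sqrt_le_mono[OF entry_sq_le_frob_inner[OF _ ij, of "S k - A"]] S[of k] A ij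
    by (simp add: minus_carrier_mat)
  have bound: "- s k \<le> S k $$ (i,j) - A $$ (i,j)" "S k $$ (i,j) - A $$ (i,j) \<le> s k" for k
    using dist[of k] unfolding abs_le_iff by linarith+
  have s: "s \<longlonglongrightarrow> 0"
    using tendsto_real_sqrt[OF lim] unfolding s_def by simp
  have "(\<lambda>k. S k $$ (i,j) - A $$ (i,j)) \<longlonglongrightarrow> 0"
  proof (rule real_tendsto_sandwich[OF _ _ _ s])
    show "(\<lambda>k. - s k) \<longlonglongrightarrow> 0" using tendsto_minus[OF s] by simp
  qed (use bound in \<open>auto intro: always_eventually\<close>)
  then show "(\<lambda>k. S k $$ (i,j)) \<longlonglongrightarrow> A $$ (i,j)"
    by (simp add: LIM_zero_iff)
qed

lemma mat_tendsto_zero_if_frob_tendsto_0: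
  assumes "(\<lambda>k. frob_inner (S k) (S k)) \<longlonglongrightarrow> 0" "\<And>k. S k \<in> carrier_mat r c"
  shows "mat_tendsto S (0\<^sub>m r c)"
proof (rule mat_tendsto_if_frob_dist_tendsto_0[OF _ assms(2)])
  have "S k - 0\<^sub>m r c = S k" for k using assms(2)[of k] by (intro eq_matI) auto
  then show "(\<lambda>k. frob_inner (S k - 0\<^sub>m r c) (S k - 0\<^sub>m r c)) \<longlonglongrightarrow> 0" using assms(1) by simp
qed simp

lemma bounded_seqs_common_convergent_subseq:
  fixes f :: "nat \<Rightarrow> 'a \<Rightarrow> real"
  assumes "finite I" "\<And>x. x \<in> I \<Longrightarrow> \<exists>b. \<forall>k. \<bar>f k x\<bar> \<le> b"
  shows "\<exists>g. strict_mono g \<and> (\<forall>x\<in>I. convergent (\<lambda>k. f (g k) x))"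
  using assms
proof (induction I rule: finite_induct)
  case empty
  then show ?case by (auto intro: strict_mono_id[unfolded id_def])
next
  case (insert x I)
  then obtain g where g: "strict_mono g" "\<forall>y\<in>I. convergent (\<lambda>k. f (g k) y)" by auto
  obtain b where b: "\<forall>k. \<bar>f k x\<bar> \<le> b" using insert.prems[of x] by auto
  obtain g' where g': "strict_mono g'" "monoseq (\<lambda>k. f (g (g' k)) x)"
    using seq_monosub[of "\<lambda>k. f (g k) x"] by (auto simp: comp_def)
  have "Bseq (\<lambda>k. f (g (g' k)) x)" using b by (intro BseqI'[of _ b]) auto
  then have "convergent (\<lambda>k. f (g (g' k)) x)" using g'(2) Bseq_monoseq_convergent by blast
  moreover have "convergent (\<lambda>k. f (g (g' k)) y)" if "y \<in> I" for y
    using convergent_subseq_convergent[OF g(2)[rule_format, OF that] g'(1)] by (simp add: comp_def)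
  moreover have "strict_mono (\<lambda>k. g (g' k))" using g(1) g'(1) by (simp add: strict_mono_def)
  ultimately show ?case by auto
qed

lemma mat_seq_bounded_convergent_subseq:
  fixes S :: "nat \<Rightarrow> real mat"
  assumes S: "\<And>k. S k \<in> carrier_mat r c" and A: "A \<in> carrier_mat r c"
    and bounded: "\<And>k. frob_inner (S k - A) (S k - A) \<le> b"
  obtains g L where "strict_mono g" "L \<in> carrier_mat r c" "mat_tendsto (\<lambda>k. S (g k)) L"
proof -
  have entry_bounded: "\<exists>b. \<forall>k. \<bar>S k $$ ij\<bar> \<le> b" if "ij \<in> {..<r} \<times> {..<c}" for ij
  proof -
    obtain i j where ij: "ij = (i,j)" by (cases ij)
    with that have ij: "ij = (i,j)" "i < r" "j < c" by auto
    have dist: "\<bar>S k $$ (i,j) - A $$ (i,j)\<bar> \<le> sqrt b" for k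
      using real_sqrt_le_mono[OF order.trans[OF entry_sq_le_frob_inner[of "S k - A" r c i j] bounded]]
        S[of k] A ij by (simp add: minus_carrier_mat)
    have "\<bar>S k $$ (i,j)\<bar> \<le> \<bar>A $$ (i,j)\<bar> + sqrt b" for k
      using dist[of k] abs_triangle_ineq2[of "S k $$ (i,j)" "A $$ (i,j)"] by linarith
    then show ?thesis unfolding ij(1) by blast
  qed
  obtain g where g: "strict_mono g" "\<forall>ij\<in>{..<r} \<times> {..<c}. convergent (\<lambda>k. S (g k) $$ ij)"
    using bounded_seqs_common_convergent_subseq[where f="\<lambda>k ij. S k $$ ij" and I="{..<r} \<times> {..<c}"]
      entry_bounded by auto
  define L where "L = mat r c (\<lambda>(i,j). lim (\<lambda>k. S (g k) $$ (i,j)))"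
  have "mat_tendsto (\<lambda>k. S (g k)) L"
    unfolding mat_tendsto_def
  proof (intro allI impI)
    fix i j assume "i < dim_row L" "j < dim_col L"
    then have ij: "i < r" "j < c" unfolding L_def by simp_all
    then have "convergent (\<lambda>k. S (g k) $$ (i,j))" using g(2) by blast
    then have "(\<lambda>k. S (g k) $$ (i,j)) \<longlonglongrightarrow> lim (\<lambda>k. S (g k) $$ (i,j))"
      by (rule convergent_LIMSEQ_iff[THEN iffD1])
    then show "(\<lambda>k. S (g k) $$ (i,j)) \<longlonglongrightarrow> L $$ (i,j)"
      using ij unfolding L_def by simp
  qed
  moreover have "L \<in> carrier_mat r c" unfolding L_def by simp
  ultimately show ?thesis using that g(1) by blast
qed

lemma sum_lessThan_mult_split:
  fixes f :: "nat \<Rightarrow> 'a :: comm_monoid_add"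
  shows "(\<Sum>k<m * n. f k) = (\<Sum>b<m. \<Sum>j<n. f (b * n + j))"
proof -
  have block: "(\<Sum>k\<in>{b * n..<b * n + n}. f k) = (\<Sum>j<n. f (b * n + j))" for b
    using sum.shift_bounds_nat_ivl[of f 0 "b * n" n] by (simp add: atLeast0LessThan add.commute)
  have "(\<Sum>k<m * n. f k) = (\<Sum>b<m. \<Sum>k\<in>{b * n..<b * n + n}. f k)"
    using sum.nat_group[where g=f and k=n and n=m] by simp
  also have "\<dots> = (\<Sum>b<m. \<Sum>j<n. f (b * n + j))" by (simp only: block)
  finally show ?thesis .
qed

lemma sum_lessThan_mult_pairs:
  fixes f :: "nat \<times> nat \<Rightarrow> 'a :: comm_monoid_add"
  shows "(\<Sum>k<r * c. f (k div c, k mod c)) = (\<Sum>ij\<in>{..<r} \<times> {..<c}. f ij)"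
proof (cases "c = 0")
  case False
  then show ?thesis by (simp add: sum_lessThan_mult_split sum.cartesian_product)
qed simp

definition mat_linear :: "nat \<Rightarrow> nat \<Rightarrow> nat \<Rightarrow> nat \<Rightarrow> (real mat \<Rightarrow> real mat) \<Rightarrow> bool" where
  "mat_linear r c r' c' f \<longleftrightarrow> (\<forall>Y\<in>carrier_mat r c. f Y \<in> carrier_mat r' c') \<and>
     (\<forall>Y\<in>carrier_mat r c. \<forall>Z\<in>carrier_mat r c. f (Y + Z) = f Y + f Z) \<and>
     (\<forall>Y\<in>carrier_mat r c. \<forall>a. f (a \<cdot>\<^sub>m Y) = a \<cdot>\<^sub>m f Y)"

lemma mat_linearD:
  assumes "mat_linear r c r' c' f" "Y \<in> carrier_mat r c"
  shows "f Y \<in> carrier_mat r' c'"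
    and "Z \<in> carrier_mat r c \<Longrightarrow> f (Y + Z) = f Y + f Z"
    and "f (a \<cdot>\<^sub>m Y) = a \<cdot>\<^sub>m f Y"
  using assms unfolding mat_linear_def by auto

lemma mat_linear_zero:
  assumes "mat_linear r c r' c' f"
  shows "f (0\<^sub>m r c) = 0\<^sub>m r' c'"
proof -
  have "f (0\<^sub>m r c) = f (0 \<cdot>\<^sub>m 0\<^sub>m r c)" by (intro arg_cong[of _ _ f] eq_matI) auto
  also have "\<dots> = 0 \<cdot>\<^sub>m f (0\<^sub>m r c)" by (rule mat_linearD(3)[OF assms]) simp
  also have "\<dots> = 0\<^sub>m r' c'" using mat_linearD(1)[OF assms, of "0\<^sub>m r c"] by (intro eq_matI) auto
  finally show ?thesis .
qed

lemma mat_linear_diff: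
  assumes f: "mat_linear r c r' c' f" and Y: "Y \<in> carrier_mat r c" and Z: "Z \<in> carrier_mat r c"
  shows "f (Y - Z) = f Y - f Z"
proof -
  have "Y - Z = Y + (-1) \<cdot>\<^sub>m Z" using Y Z by (intro eq_matI) auto
  then have "f (Y - Z) = f Y + (-1) \<cdot>\<^sub>m f Z" using mat_linearD[OF f] Y Z by simp
  also have "\<dots> = f Y - f Z" using mat_linearD(1)[OF f] Y Z by (intro eq_matI) auto
  finally show ?thesis .
qed

lemma mat_linear_mult_left: "P \<in> carrier_mat r' r \<Longrightarrow> mat_linear r c r' c (\<lambda>Y. P * Y)"
  unfolding mat_linear_def by (auto simp: mult_add_distrib_mat[of _ r' r] mult_smult_distrib[of _ r' r])

lemma mat_linear_mult_right: "Q \<in> carrier_mat c c' \<Longrightarrow> mat_linear r c r c' (\<lambda>Y. Y * Q)"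
  unfolding mat_linear_def by (auto simp: add_mult_distrib_mat[of _ r c] mult_smult_assoc_mat[of _ r c])

lemma mat_linear_ident: "mat_linear r c r c (\<lambda>Y. Y)"
  unfolding mat_linear_def by auto

lemma mat_linear_comp:
  "mat_linear r c r' c' f \<Longrightarrow> mat_linear r' c' r'' c'' g \<Longrightarrow> mat_linear r c r'' c'' (\<lambda>Y. g (f Y))"
  unfolding mat_linear_def by auto

lemma mat_linear_add:
  assumes f: "mat_linear r c r' c' f" and g: "mat_linear r c r' c' g"
  shows "mat_linear r c r' c' (\<lambda>Y. f Y + g Y)"
  unfolding mat_linear_def
proof (intro conjI ballI allI)
  fix Y Z :: "real mat" and a :: real
  assume Y: "Y \<in> carrier_mat r c"
  note fY = mat_linearD[OF f Y] and gY = mat_linearD[OF g Y]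
  show "f Y + g Y \<in> carrier_mat r' c'" using gY(1) by simp
  show "f (a \<cdot>\<^sub>m Y) + g (a \<cdot>\<^sub>m Y) = a \<cdot>\<^sub>m (f Y + g Y)"
    using fY(1,3) gY(1,3) by (intro eq_matI) (auto simp: algebra_simps)
  assume Z: "Z \<in> carrier_mat r c"
  show "f (Y + Z) + g (Y + Z) = f Y + g Y + (f Z + g Z)"
    using fY(1) fY(2)[OF Z] gY(1) gY(2)[OF Z] mat_linearD(1)[OF f Z] mat_linearD(1)[OF g Z]
    by (intro eq_matI) auto
qed

lemma mat_linear_smult:
  assumes f: "mat_linear r c r' c' f"
  shows "mat_linear r c r' c' (\<lambda>Y. a \<cdot>\<^sub>m f Y)"
  unfolding mat_linear_def
proof (intro conjI ballI allI)
  fix Y Z :: "real mat" and b :: real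
  assume Y: "Y \<in> carrier_mat r c"
  note fY = mat_linearD[OF f Y]
  show "a \<cdot>\<^sub>m f Y \<in> carrier_mat r' c'" using fY(1) by simp
  show "a \<cdot>\<^sub>m f (b \<cdot>\<^sub>m Y) = b \<cdot>\<^sub>m (a \<cdot>\<^sub>m f Y)"
    using fY(1,3) by (intro eq_matI) (auto simp: algebra_simps)
  assume Z: "Z \<in> carrier_mat r c"
  show "a \<cdot>\<^sub>m f (Y + Z) = a \<cdot>\<^sub>m f Y + a \<cdot>\<^sub>m f Z"
    using fY(1) fY(2)[OF Z] mat_linearD(1)[OF f Z] by (intro eq_matI) (auto simp: algebra_simps)
qed

lemma mat_linear_diff_fun:
  assumes "mat_linear r c r' c' f" "mat_linear r c r' c' g"
  shows "mat_linear r c r' c' (\<lambda>Y. f Y - g Y)"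
proof -
  have "mat_linear r c r' c' (\<lambda>Y. f Y + (-1) \<cdot>\<^sub>m g Y)"
    by (intro mat_linear_add mat_linear_smult assms)
  moreover have "f Y + (-1) \<cdot>\<^sub>m g Y = f Y - g Y" if "Y \<in> carrier_mat r c" for Y
    using mat_linearD(1)[OF assms(1) that] mat_linearD(1)[OF assms(2) that] by (intro eq_matI) auto
  ultimately show ?thesis unfolding mat_linear_def by auto
qed

lemma msum_carrier: "msum r c f S \<in> carrier_mat r c"
  unfolding msum_def by auto

lemma msum_empty: "msum r c f {} = 0\<^sub>m r c"
  unfolding msum_def by (intro eq_matI) auto

lemma msum_insert: "finite S \<Longrightarrow> x \<notin> S \<Longrightarrow> msum r c f (insert x S) = f x + msum r c f S"
  unfolding msum_def by (intro eq_matI) auto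

lemma mat_linear_msum:
  assumes f: "mat_linear r c r' c' f" and S: "finite S" and g: "\<And>x. x \<in> S \<Longrightarrow> g x \<in> carrier_mat r c"
  shows "f (msum r c g S) = msum r' c' (\<lambda>x. f (g x)) S"
  using S g
proof (induction S rule: finite_induct)
  case empty
  then show ?case using mat_linear_zero[OF f] by (simp add: msum_empty)
next
  case (insert x S)
  then show ?case using mat_linearD(2)[OF f] by (simp add: msum_insert msum_carrier)
qed

definition mat_unit :: "nat \<Rightarrow> nat \<Rightarrow> nat \<times> nat \<Rightarrow> real mat" where
  "mat_unit r c ij = mat r c (\<lambda>ij'. of_bool (ij' = ij))"

lemma mat_unit_carrier: "mat_unit r c ij \<in> carrier_mat r c"
  unfolding mat_unit_def by simp

lemma mat_linear_expand:
  assumes f: "mat_linear r c r' c' f" and Y: "Y \<in> carrier_mat r c"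
  shows "f Y = msum r' c' (\<lambda>ij. Y $$ ij \<cdot>\<^sub>m f (mat_unit r c ij)) ({..<r} \<times> {..<c})"
proof -
  have Y_expand: "Y = msum r c (\<lambda>ij. Y $$ ij \<cdot>\<^sub>m mat_unit r c ij) ({..<r} \<times> {..<c})"
  proof (rule eq_matI)
    fix i j assume "i < dim_row (msum r c (\<lambda>ij. Y $$ ij \<cdot>\<^sub>m mat_unit r c ij) ({..<r} \<times> {..<c}))"
      "j < dim_col (msum r c (\<lambda>ij. Y $$ ij \<cdot>\<^sub>m mat_unit r c ij) ({..<r} \<times> {..<c}))"
    then have ij: "i < r" "j < c" by (simp_all add: msum_def)
    have "msum r c (\<lambda>ij. Y $$ ij \<cdot>\<^sub>m mat_unit r c ij) ({..<r} \<times> {..<c}) $$ (i,j)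
        = (\<Sum>ij'\<in>{..<r} \<times> {..<c}. Y $$ ij' * of_bool (ij' = (i,j)))"
      using ij unfolding msum_def mat_unit_def by (auto intro!: sum.cong)
    also have "\<dots> = Y $$ (i,j)"
    proof -
      have "{..<r} \<times> {..<c} \<inter> {ij'. ij' = (i,j)} = {(i,j)}" using ij by auto
      then show ?thesis unfolding sum_mult_of_bool_eq by simp
    qed
    finally show "Y $$ (i,j) = msum r c (\<lambda>ij. Y $$ ij \<cdot>\<^sub>m mat_unit r c ij) ({..<r} \<times> {..<c}) $$ (i,j)"
      by simp
  qed (use Y in \<open>auto simp: msum_def\<close>)
  from Y_expand have "f Y = f (msum r c (\<lambda>ij. Y $$ ij \<cdot>\<^sub>m mat_unit r c ij) ({..<r} \<times> {..<c}))"
    by (rule arg_cong)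
  also have "\<dots> = msum r' c' (\<lambda>ij. f (Y $$ ij \<cdot>\<^sub>m mat_unit r c ij)) ({..<r} \<times> {..<c})"
    by (rule mat_linear_msum[OF f]) (auto simp: mat_unit_carrier)
  also have "\<dots> = msum r' c' (\<lambda>ij. Y $$ ij \<cdot>\<^sub>m f (mat_unit r c ij)) ({..<r} \<times> {..<c})"
    by (simp only: mat_linearD(3)[OF f mat_unit_carrier])
  finally show ?thesis .
qed

lemma mat_linear_index:
  assumes f: "mat_linear r c r' c' f" and Y: "Y \<in> carrier_mat r c" and "a < r'" "b < c'"
  shows "f Y $$ (a,b) = (\<Sum>ij\<in>{..<r} \<times> {..<c}. Y $$ ij * f (mat_unit r c ij) $$ (a,b))"
proof -
  have carrier: "f (mat_unit r c ij) \<in> carrier_mat r' c'" for ij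
    by (rule mat_linearD(1)[OF f mat_unit_carrier])
  have "dim_row (f (mat_unit r c ij)) = r'" "dim_col (f (mat_unit r c ij)) = c'" for ij
    using carrier[of ij] by auto
  then show ?thesis
    using assms by (subst mat_linear_expand[OF f Y]) (auto simp: msum_def intro!: sum.cong)
qed

lemma mat_tendsto_linear:
  assumes f: "mat_linear r c r' c' f" and lim: "mat_tendsto S A"
    and S: "\<And>k. S k \<in> carrier_mat r c" and A: "A \<in> carrier_mat r c"
  shows "mat_tendsto (\<lambda>k. f (S k)) (f A)"
  unfolding mat_tendsto_def
proof (intro allI impI)
  fix a b assume "a < dim_row (f A)" "b < dim_col (f A)"
  then have ab: "a < r'" "b < c'" using mat_linearD(1)[OF f A] by auto
  have entry: "(\<lambda>k. S k $$ ij) \<longlonglongrightarrow> A $$ ij" if "ij \<in> {..<r} \<times> {..<c}" for ij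
    using lim A that unfolding mat_tendsto_def by (cases ij) auto
  have "(\<lambda>k. \<Sum>ij\<in>{..<r} \<times> {..<c}. S k $$ ij * f (mat_unit r c ij) $$ (a,b))
      \<longlonglongrightarrow> (\<Sum>ij\<in>{..<r} \<times> {..<c}. A $$ ij * f (mat_unit r c ij) $$ (a,b))"
    by (intro tendsto_sum tendsto_mult_right entry)
  then show "(\<lambda>k. f (S k) $$ (a,b)) \<longlonglongrightarrow> f A $$ (a,b)"
    unfolding mat_linear_index[OF f S ab] mat_linear_index[OF f A ab] .
qed

lemma mat_inverse_if_trivial_kernel:
  assumes A: "(A :: real mat) \<in> carrier_mat N N"
    and ker: "\<And>v. v \<in> carrier_vec N \<Longrightarrow> A *\<^sub>v v = 0\<^sub>v N \<Longrightarrow> v = 0\<^sub>v N"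
  shows "\<exists>B. B \<in> carrier_mat N N \<and> A * B = 1\<^sub>m N \<and> B * A = 1\<^sub>m N"
proof -
  have "det A \<noteq> 0" using det_0_iff_vec_prod_zero[OF A] ker by auto
  from det_non_zero_imp_unit[OF A this, of "()"]
  show ?thesis unfolding Units_def ring_mat_def by auto
qed

lemma mat_linear_inj_imp_surj:
  assumes f: "mat_linear r c r c f"
    and inj: "\<And>Y. Y \<in> carrier_mat r c \<Longrightarrow> f Y = 0\<^sub>m r c \<Longrightarrow> Y = 0\<^sub>m r c"
    and T: "T \<in> carrier_mat r c"
  obtains Y where "Y \<in> carrier_mat r c" "f Y = T"
proof -
  define N where "N = r * c"
  define vec_of where "vec_of A = vec N (\<lambda>k. A $$ (k div c, k mod c))" for A :: "real mat"
  define mat_of where "mat_of v = mat r c (\<lambda>(i,j). v $ (i * c + j))" for v :: "real vec"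
  define F where "F = mat N N (\<lambda>(a,b). f (mat_unit r c (b div c, b mod c)) $$ (a div c, a mod c))"
  have div_mod: "k div c < r" "k mod c < c" if "k < N" for k
  proof -
    have "c > 0" using that unfolding N_def by (cases c) auto
    then show "k div c < r" "k mod c < c"
      using that unfolding N_def by (auto simp: less_mult_imp_div_less)
  qed
  have index: "i * c + j < N" "(i * c + j) div c = i" "(i * c + j) mod c = j" if "i < r" "j < c" for i j
  proof -
    have "i * c + j < (i + 1) * c" using that by simp
    also have "\<dots> \<le> r * c" using that by (intro mult_right_mono) auto
    finally show "i * c + j < N" unfolding N_def .
  qed (use that in auto)
  have F: "F \<in> carrier_mat N N" unfolding F_def by simp
  have F_vec_of: "F *\<^sub>v vec_of Y = vec_of (f Y)" if Y: "Y \<in> carrier_mat r c" for Y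
  proof (rule eq_vecI)
    fix a assume "a < dim_vec (vec_of (f Y))"
    then have a: "a < N" unfolding vec_of_def by simp
    have "(F *\<^sub>v vec_of Y) $ a
        = (\<Sum>k<r * c. Y $$ (k div c, k mod c) * f (mat_unit r c (k div c, k mod c)) $$ (a div c, a mod c))"
      using a unfolding F_def vec_of_def N_def by (auto simp: scalar_prod_def lessThan_atLeast0 mult.commute)
    also have "\<dots> = f Y $$ (a div c, a mod c)"
      by (subst sum_lessThan_mult_pairs) (rule mat_linear_index[OF f Y div_mod[OF a], symmetric])
    finally show "(F *\<^sub>v vec_of Y) $ a = vec_of (f Y) $ a" using a unfolding vec_of_def by simp
  qed (simp add: F_def vec_of_def)
  have vec_of_mat_of: "vec_of (mat_of v) = v" if "v \<in> carrier_vec N" for v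
    using that div_mod unfolding vec_of_def mat_of_def by (intro eq_vecI) auto
  have mat_of_vec_of: "mat_of (vec_of A) = A" if "A \<in> carrier_mat r c" for A
    using that index unfolding vec_of_def mat_of_def by (intro eq_matI) auto
  have vec_of_inj: "A = B" if "A \<in> carrier_mat r c" "B \<in> carrier_mat r c" "vec_of A = vec_of B" for A B
  proof -
    have "A = mat_of (vec_of A)" using mat_of_vec_of[OF that(1)] ..
    also have "\<dots> = B" unfolding that(3) by (rule mat_of_vec_of[OF that(2)])
    finally show ?thesis .
  qed
  have mat_of: "mat_of v \<in> carrier_mat r c" for v unfolding mat_of_def by simp
  have vec_of: "vec_of A \<in> carrier_vec N" for A unfolding vec_of_def by simp
  have "v = 0\<^sub>v N" if v: "v \<in> carrier_vec N" and Fv: "F *\<^sub>v v = 0\<^sub>v N" for v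
  proof -
    have "vec_of (0\<^sub>m r c) = 0\<^sub>v N" unfolding vec_of_def using div_mod by (intro eq_vecI) auto
    then have "vec_of (f (mat_of v)) = vec_of (0\<^sub>m r c)"
      using F_vec_of[OF mat_of, of v] Fv vec_of_mat_of[OF v] by simp
    then have "f (mat_of v) = 0\<^sub>m r c"
      by (rule vec_of_inj[OF mat_linearD(1)[OF f mat_of] zero_carrier_mat])
    then have "mat_of v = 0\<^sub>m r c" using inj[OF mat_of] by blast
    then show ?thesis using vec_of_mat_of[OF v] \<open>vec_of (0\<^sub>m r c) = 0\<^sub>v N\<close> by simp
  qed
  then obtain G where G: "G \<in> carrier_mat N N" "F * G = 1\<^sub>m N"
    using mat_inverse_if_trivial_kernel[OF F] by blast
  define Y where "Y = mat_of (G *\<^sub>v vec_of T)"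
  have "vec_of Y = G *\<^sub>v vec_of T"
    unfolding Y_def by (rule vec_of_mat_of) (use G(1) vec_of in simp)
  then have "vec_of (f Y) = F *\<^sub>v (G *\<^sub>v vec_of T)"
    using F_vec_of[OF mat_of, of "G *\<^sub>v vec_of T"] unfolding Y_def by simp
  also have "\<dots> = vec_of T" using F G vec_of by (simp add: assoc_mult_mat_vec[symmetric, of _ N N])
  finally have "f Y = T"
    unfolding Y_def by (rule vec_of_inj[OF mat_linearD(1)[OF f mat_of] T])
  with mat_of show ?thesis using that unfolding Y_def by blast
qed

definition frob_dist_sq :: "real mat \<Rightarrow> real mat \<Rightarrow> real" where
  "frob_dist_sq A B = frob_inner (A - B) (A - B)"

lemma frob_dist_sq_nonneg: "0 \<le> frob_dist_sq A B"
  unfolding frob_dist_sq_def by (rule frob_inner_self_nonneg)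

lemma frob_dist_sq_self: "A \<in> carrier_mat r c \<Longrightarrow> frob_dist_sq A A = 0"
  unfolding frob_dist_sq_def using frob_inner_zero_left[of "0\<^sub>m r c" r c]
  by (metis minus_r_inv_mat zero_carrier_mat)

lemma mat_eq_if_diff_eq_0:
  assumes "(A :: real mat) \<in> carrier_mat r c" "B \<in> carrier_mat r c" "A - B = 0\<^sub>m r c"
  shows "A = B"
proof (rule eq_matI)
  fix i j assume ij: "i < dim_row B" "j < dim_col B"
  have "(A - B) $$ (i,j) = 0" using assms(2,3) ij by simp
  then show "A $$ (i,j) = B $$ (i,j)" using ij by simp
qed (use assms in auto)

lemma frob_dist_sq_commute:
  "A \<in> carrier_mat r c \<Longrightarrow> B \<in> carrier_mat r c \<Longrightarrow> frob_dist_sq A B = frob_dist_sq B A"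
  unfolding frob_dist_sq_def by (simp add: frob_inner_diff_self[of _ r c] frob_inner_commute[of A r c B])

lemma monotone_pair_dist_le:
  assumes "a \<in> carrier_mat r c" "b \<in> carrier_mat r c" "frob_inner a b \<le> 0"
  shows "frob_inner a a + frob_inner b b \<le> frob_inner (a - b) (a - b)"
  using assms by (simp add: frob_inner_diff_self[of _ r c])

lemma three_point_inequality:
  assumes c: "a \<in> carrier_mat r c" "b \<in> carrier_mat r c" "u \<in> carrier_mat r c"
    and monotone: "frob_inner a b \<le> 0" and orthogonal: "frob_inner u (u - a - b) = 0"
  shows "frob_inner (u - b) (u - b) + frob_inner (u - a) (u - a) \<le> frob_inner (a - b) (a - b)"
proof -
  have "frob_inner u (u - a - b) = frob_inner u u - frob_inner u a - frob_inner u b"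
    using c by (simp add: frob_inner_diff_right[of _ r c] minus_carrier_mat)
  with monotone orthogonal c show ?thesis
    by (simp add: frob_inner_diff_self[of _ r c] frob_inner_commute[of a r c u]
        frob_inner_commute[of b r c u])
qed

lemma decseq_tendsto_0_if_subseq:
  fixes e :: "nat \<Rightarrow> real"
  assumes "\<And>k. e (Suc k) \<le> e k" "\<And>k. 0 \<le> e k" "strict_mono g" "(\<lambda>k. e (g k)) \<longlonglongrightarrow> 0"
  shows "e \<longlonglongrightarrow> 0"
proof -
  have "decseq e" using assms(1) by (simp add: decseq_SucI)
  moreover have "Bseq e" using \<open>decseq e\<close> assms(2) by (intro BseqI'[of _ "e 0"]) (auto simp: decseq_def)
  ultimately obtain L where L: "e \<longlonglongrightarrow> L"
    using Bseq_monoseq_convergent monoseq_iff convergent_def by blast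
  then have "(\<lambda>k. e (g k)) \<longlonglongrightarrow> L" using LIMSEQ_subseq_LIMSEQ[OF L assms(3)] by (simp add: comp_def)
  then have "L = 0" using assms(4) LIMSEQ_unique by blast
  then show ?thesis using L by simp
qed

locale scaled_admm =
  fixes l n N :: nat
    and G H :: "real mat"
    and R :: "real mat \<Rightarrow> real mat \<Rightarrow> bool"
    and X V D :: "nat \<Rightarrow> real mat"
  assumes G: "G \<in> carrier_mat n N" and H: "H \<in> carrier_mat N n" and G_H: "G * H = 1\<^sub>m n"
    and R_carrier: "\<And>v d. R v d \<Longrightarrow> v \<in> carrier_mat l N \<and> d \<in> carrier_mat l N"
    and R_monotone: "\<And>v d v' d'. R v d \<Longrightarrow> R v' d' \<Longrightarrow> frob_inner (v - v') (d - d') \<le> 0"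
    and R_closed: "\<And>S T v d. (\<And>k. R (S k) (T k)) \<Longrightarrow> mat_tendsto S v \<Longrightarrow> mat_tendsto T d \<Longrightarrow>
        v \<in> carrier_mat l N \<Longrightarrow> d \<in> carrier_mat l N \<Longrightarrow> R v d"
    and saddle_point_exists:
      "\<exists>x d. x \<in> carrier_mat l n \<and> R (x * G) d \<and> d * transpose_mat G = 0\<^sub>m l n"
    and V_0: "V 0 \<in> carrier_mat l N" and D_0: "D 0 \<in> carrier_mat l N"
    and X_carrier: "\<And>k. X (Suc k) \<in> carrier_mat l n"
    and X_step: "\<And>k. (X (Suc k) * G - V k - D k) * transpose_mat G = 0\<^sub>m l n"
    and V_step: "\<And>k. R (V (Suc k)) (D (Suc k))"
    and D_step: "\<And>k. D (Suc k) = D k - (X (Suc k) * G - V (Suc k))"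
begin

definition saddle_point :: "real mat \<Rightarrow> real mat \<Rightarrow> bool" where
  "saddle_point x d \<longleftrightarrow> x \<in> carrier_mat l n \<and> R (x * G) d \<and> d * transpose_mat G = 0\<^sub>m l n"

definition U :: "nat \<Rightarrow> real mat" where
  "U k = V k - D k"

lemma V_carrier: "V k \<in> carrier_mat l N"
  by (cases k) (use V_0 V_step R_carrier in auto)

lemma D_carrier: "D k \<in> carrier_mat l N"
  by (cases k) (use D_0 V_step R_carrier in auto)

lemma U_carrier: "U k \<in> carrier_mat l N"
  unfolding U_def using D_carrier by (rule minus_carrier_mat)

lemma dims [simp]:
  "dim_row (V k) = l" "dim_col (V k) = N" "dim_row (D k) = l" "dim_col (D k) = N"
  "dim_row (X (Suc k)) = l" "dim_col (X (Suc k)) = n"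
  using V_carrier D_carrier X_carrier by auto

lemma saddle_point_carrier:
  assumes "saddle_point x d"
  shows "x \<in> carrier_mat l n" "x * G \<in> carrier_mat l N" "d \<in> carrier_mat l N"
  using assms G R_carrier unfolding saddle_point_def by auto

lemma X_mult_G: "X (Suc k) * G = V (Suc k) + (D k - D (Suc k))"
  using X_carrier[of k] G V_carrier D_carrier unfolding D_step[of k] by (intro eq_matI) auto

lemma X_eq: "X (Suc k) = (V (Suc k) + (D k - D (Suc k))) * H"
proof -
  have "X (Suc k) = X (Suc k) * (G * H)" using X_carrier[of k] by (simp add: G_H)
  also have "\<dots> = X (Suc k) * G * H" using X_carrier[of k] G H by simp
  finally show ?thesis by (simp only: X_mult_G)
qed

lemma D_mult_G_transpose: "D (Suc k) * transpose_mat G = (V (Suc k) - V k) * transpose_mat G"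
proof -
  have Gt: "transpose_mat G \<in> carrier_mat N n" using G by simp
  have "X (Suc k) * G - V k - D k = (V (Suc k) - V k) - D (Suc k)"
    using V_carrier D_carrier unfolding X_mult_G by (intro eq_matI) auto
  moreover have "((V (Suc k) - V k) - D (Suc k)) * transpose_mat G
      = (V (Suc k) - V k) * transpose_mat G - D (Suc k) * transpose_mat G"
    by (rule minus_mult_distrib_mat) (use D_carrier Gt in \<open>auto simp: minus_carrier_mat\<close>)
  ultimately have "(V (Suc k) - V k) * transpose_mat G - D (Suc k) * transpose_mat G = 0\<^sub>m l n"
    using X_step[of k] by simp
  then have "(V (Suc k) - V k) * transpose_mat G = D (Suc k) * transpose_mat G"
    by (rule mat_eq_if_diff_eq_0[rotated 2]) (use D_carrier Gt in \<open>auto simp: minus_carrier_mat\<close>)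
  then show ?thesis by simp
qed

lemma pair_dist_le:
  assumes "R v d" "R v' d'"
  shows "frob_dist_sq v v' + frob_dist_sq d d' \<le> frob_dist_sq (v - d) (v' - d')"
proof -
  have c: "v \<in> carrier_mat l N" "d \<in> carrier_mat l N" "v' \<in> carrier_mat l N" "d' \<in> carrier_mat l N"
    using assms R_carrier by auto
  have "(v - d) - (v' - d') = (v - v') - (d - d')" using c by (intro eq_matI) auto
  then show ?thesis
    unfolding frob_dist_sq_def
    using monotone_pair_dist_le[of "v - v'" l N "d - d'", OF _ _ R_monotone[OF assms]] c
    by (simp add: minus_carrier_mat)
qed

lemma fejer_monotone:
  assumes S: "saddle_point x d"
  shows "frob_dist_sq (U (Suc (Suc k))) (x * G - d) + frob_dist_sq (U (Suc (Suc k))) (U (Suc k))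
    \<le> frob_dist_sq (U (Suc k)) (x * G - d)"
proof -
  note xd = saddle_point_carrier[OF S]
  define a where "a = V (Suc k) - x * G"
  define b where "b = D (Suc k) - d"
  define u where "u = X (Suc (Suc k)) * G - x * G"
  define g where "g = X (Suc (Suc k)) * G - V (Suc k) - D (Suc k)"
  have XG: "X (Suc (Suc k)) * G \<in> carrier_mat l N" using mult_carrier_mat[OF X_carrier G] .
  have c: "a \<in> carrier_mat l N" "b \<in> carrier_mat l N" "u \<in> carrier_mat l N" "g \<in> carrier_mat l N"
    unfolding a_def b_def u_def g_def using xd D_carrier by (auto intro: minus_carrier_mat)
  have Gt: "transpose_mat G \<in> carrier_mat N n" using G by simp
  have monotone: "frob_inner a b \<le> 0"
    unfolding a_def b_def using R_monotone V_step S unfolding saddle_point_def by blast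
  have "frob_inner u (u - a - b) = 0"
  proof -
    have "u = (X (Suc (Suc k)) - x) * G"
      unfolding u_def using X_carrier xd G by (simp add: minus_mult_distrib_mat[of _ l n])
    moreover have "u - a - b = g + d"
      unfolding a_def b_def u_def g_def using XG xd V_carrier D_carrier by (intro eq_matI) auto
    moreover have "(g + d) * transpose_mat G = 0\<^sub>m l n"
      using X_step[of "Suc k"] S xd c Gt unfolding g_def saddle_point_def
      by (simp add: add_mult_distrib_mat[of _ l N])
    ultimately show ?thesis
      using frob_inner_mult_right[of G n N "X (Suc (Suc k)) - x" l "g + d"] G X_carrier xd c
      by (simp add: minus_carrier_mat frob_inner_zero_right)
  qed
  note ineq = three_point_inequality[OF c(1-3) monotone this]
  have "U (Suc (Suc k)) - (x * G - d) = u - b" "U (Suc (Suc k)) - U (Suc k) = u - a"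
    "U (Suc k) - (x * G - d) = a - b"
    unfolding U_def a_def b_def u_def D_step[of "Suc k"] using XG xd V_carrier D_carrier
    by (auto intro!: eq_matI)
  then show ?thesis using ineq unfolding frob_dist_sq_def by simp
qed

lemma U_dist_le_initial:
  assumes "saddle_point x d"
  shows "frob_dist_sq (U (Suc k)) (x * G - d) \<le> frob_dist_sq (U 1) (x * G - d)"
proof (induction k)
  case (Suc k)
  then show ?case using fejer_monotone[OF assms, of k] frob_dist_sq_nonneg by smt
qed simp

lemma saddle_point_dist_le:
  assumes "saddle_point x d"
  shows "frob_dist_sq (V (Suc k)) (x * G) + frob_dist_sq (D (Suc k)) d \<le> frob_dist_sq (U (Suc k)) (x * G - d)"
  using pair_dist_le[OF V_step] assms unfolding saddle_point_def U_def by blast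

lemma U_increments_tendsto_0: "(\<lambda>k. frob_dist_sq (U (Suc (Suc k))) (U (Suc k))) \<longlonglongrightarrow> 0"
proof -
  obtain x d where S: "saddle_point x d" using saddle_point_exists unfolding saddle_point_def by blast
  let ?e = "\<lambda>k. frob_dist_sq (U (Suc k)) (x * G - d)"
  have "?e K + (\<Sum>k<K. frob_dist_sq (U (Suc (Suc k))) (U (Suc k))) \<le> ?e 0" for K
  proof (induction K)
    case (Suc K)
    then show ?case using fejer_monotone[OF S, of K] by simp
  qed simp
  then have "(\<Sum>k<K. frob_dist_sq (U (Suc (Suc k))) (U (Suc k))) \<le> ?e 0" for K
    using frob_dist_sq_nonneg[of "U (Suc K)" "x * G - d"] by smt
  then have "summable (\<lambda>k. frob_dist_sq (U (Suc (Suc k))) (U (Suc k)))"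
    using frob_dist_sq_nonneg by (intro summableI_nonneg_bounded) auto
  then show ?thesis by (rule summable_LIMSEQ_zero)
qed

lemma increments_tendsto_0:
  "mat_tendsto (\<lambda>k. V (Suc k) - V k) (0\<^sub>m l N)" "mat_tendsto (\<lambda>k. D k - D (Suc k)) (0\<^sub>m l N)"
proof -
  have bound: "frob_dist_sq (V (Suc (Suc k))) (V (Suc k)) + frob_dist_sq (D (Suc k)) (D (Suc (Suc k)))
      \<le> frob_dist_sq (U (Suc (Suc k))) (U (Suc k))" for k
    using pair_dist_le[OF V_step V_step, of "Suc k" k] frob_dist_sq_commute[OF D_carrier D_carrier]
    unfolding U_def by simp
  have le: "frob_dist_sq (V (Suc (Suc k))) (V (Suc k)) \<le> frob_dist_sq (U (Suc (Suc k))) (U (Suc k))"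
    "frob_dist_sq (D (Suc k)) (D (Suc (Suc k))) \<le> frob_dist_sq (U (Suc (Suc k))) (U (Suc k))" for k
    using bound[of k] frob_dist_sq_nonneg[of "V (Suc (Suc k))" "V (Suc k)"]
      frob_dist_sq_nonneg[of "D (Suc k)" "D (Suc (Suc k))"] by linarith+
  have "(\<lambda>k. frob_dist_sq (V (Suc (Suc k))) (V (Suc k))) \<longlonglongrightarrow> 0"
    "(\<lambda>k. frob_dist_sq (D (Suc k)) (D (Suc (Suc k)))) \<longlonglongrightarrow> 0"
    by (auto intro!: real_tendsto_sandwich[OF _ _ tendsto_const U_increments_tendsto_0] always_eventually
        simp: frob_dist_sq_nonneg le)
  then have "mat_tendsto (\<lambda>k. V (Suc (Suc k)) - V (Suc k)) (0\<^sub>m l N)"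
    "mat_tendsto (\<lambda>k. D (Suc k) - D (Suc (Suc k))) (0\<^sub>m l N)"
    unfolding frob_dist_sq_def
    by (auto intro!: mat_tendsto_zero_if_frob_tendsto_0 minus_carrier_mat simp del: minus_carrier_mat)
  then show "mat_tendsto (\<lambda>k. V (Suc k) - V k) (0\<^sub>m l N)" "mat_tendsto (\<lambda>k. D k - D (Suc k)) (0\<^sub>m l N)"
    using mat_tendsto_Suc_iff[of "\<lambda>k. V (Suc k) - V k"] mat_tendsto_Suc_iff[of "\<lambda>k. D k - D (Suc k)"]
    by blast+
qed

lemma limit_point_is_saddle_point:
  obtains g x d where "strict_mono g" "saddle_point x d"
    "mat_tendsto (\<lambda>k. V (Suc (g k))) (x * G)" "mat_tendsto (\<lambda>k. D (Suc (g k))) d"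
proof -
  obtain x0 d0 where S0: "saddle_point x0 d0" using saddle_point_exists unfolding saddle_point_def by blast
  note c0 = saddle_point_carrier[OF S0]
  let ?b = "frob_dist_sq (U 1) (x0 * G - d0)"
  have bound: "frob_dist_sq (V (Suc k)) (x0 * G) \<le> ?b" "frob_dist_sq (D (Suc k)) d0 \<le> ?b" for k
    using saddle_point_dist_le[OF S0, of k] U_dist_le_initial[OF S0, of k]
      frob_dist_sq_nonneg[of "V (Suc k)" "x0 * G"] frob_dist_sq_nonneg[of "D (Suc k)" d0]
    by linarith+
  obtain g1 v where g1: "strict_mono g1" "v \<in> carrier_mat l N" "mat_tendsto (\<lambda>k. V (Suc (g1 k))) v"
    by (rule mat_seq_bounded_convergent_subseq[where S="\<lambda>k. V (Suc k)", OF V_carrier c0(2)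
          bound(1)[unfolded frob_dist_sq_def]])
  obtain g2 d where g2: "strict_mono g2" "d \<in> carrier_mat l N"
      "mat_tendsto (\<lambda>k. D (Suc (g1 (g2 k)))) d"
    by (rule mat_seq_bounded_convergent_subseq[where S="\<lambda>k. D (Suc (g1 k))", OF D_carrier c0(3)
          bound(2)[unfolded frob_dist_sq_def]])
  define g where "g = g1 \<circ> g2"
  have g: "strict_mono g" unfolding g_def using g1(1) g2(1) by (rule strict_mono_o)
  have V_lim: "mat_tendsto (\<lambda>k. V (Suc (g k))) v"
    using mat_tendsto_subseq[OF g1(3) g2(1)] unfolding g_def by simp
  have D_lim: "mat_tendsto (\<lambda>k. D (Suc (g k))) d" using g2(3) unfolding g_def by simp
  have dV: "mat_tendsto (\<lambda>k. V (Suc (g k)) - V (g k)) (0\<^sub>m l N)"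
    and dD: "mat_tendsto (\<lambda>k. D (g k) - D (Suc (g k))) (0\<^sub>m l N)"
    using mat_tendsto_subseq[OF increments_tendsto_0(1) g] mat_tendsto_subseq[OF increments_tendsto_0(2) g]
    by simp_all
  have Gt: "transpose_mat G \<in> carrier_mat N n" using G by simp
  have R: "R v d" by (rule R_closed[OF V_step V_lim D_lim g1(2) g2(2)])
  have "mat_tendsto (\<lambda>k. D (Suc (g k)) * transpose_mat G) (d * transpose_mat G)"
    by (rule mat_tendsto_mult_right[OF D_lim D_carrier g2(2) Gt])
  moreover have "mat_tendsto (\<lambda>k. D (Suc (g k)) * transpose_mat G) (0\<^sub>m l N * transpose_mat G)"
    unfolding D_mult_G_transpose
    by (rule mat_tendsto_mult_right[OF dV _ _ Gt]) (auto intro: minus_carrier_mat)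
  ultimately have dual: "d * transpose_mat G = 0\<^sub>m l n"
    using mat_tendsto_unique[where r=l and c=n] g2(2) Gt by simp
  have "v + 0\<^sub>m l N = v" using g1(2) by (intro eq_matI) auto
  then have XG_lim: "mat_tendsto (\<lambda>k. X (Suc (g k)) * G) v"
    using mat_tendsto_add[where r=l and c=N, OF V_lim dD] g1(2) D_carrier unfolding X_mult_G
    by (simp add: minus_carrier_mat)
  have "mat_tendsto (\<lambda>k. X (Suc (g k)) * G * H) (v * H)"
    by (rule mat_tendsto_mult_right[OF XG_lim _ g1(2) H]) (rule mult_carrier_mat[OF X_carrier G])
  moreover have "X (Suc k) * G * H = X (Suc k)" for k
    using X_carrier[of k] G H by (simp add: G_H)
  ultimately have X_lim: "mat_tendsto (\<lambda>k. X (Suc (g k))) (v * H)" by simp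
  have XG_lim': "mat_tendsto (\<lambda>k. X (Suc (g k)) * G) (v * H * G)"
    by (rule mat_tendsto_mult_right[OF X_lim X_carrier _ G]) (use g1(2) H in simp)
  have primal: "v * H * G = v"
    using mat_tendsto_unique[where r=l and c=N, OF XG_lim' XG_lim] g1(2) G H by simp
  have saddle: "saddle_point (v * H) d"
    unfolding saddle_point_def using primal R dual g1(2) H by simp
  have "mat_tendsto (\<lambda>k. V (Suc (g k))) (v * H * G)" using V_lim primal by simp
  then show ?thesis by (rule that[OF g saddle _ D_lim])
qed

theorem X_convergent: "\<exists>L \<in> carrier_mat l n. mat_tendsto X L"
proof -
  obtain g x d where g: "strict_mono g" and S: "saddle_point x d"
    and V_lim: "mat_tendsto (\<lambda>k. V (Suc (g k))) (x * G)" and D_lim: "mat_tendsto (\<lambda>k. D (Suc (g k))) d"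
    by (rule limit_point_is_saddle_point)
  note c = saddle_point_carrier[OF S]
  let ?e = "\<lambda>k. frob_dist_sq (U (Suc k)) (x * G - d)"
  have lim_diff: "mat_tendsto (\<lambda>k. U (Suc (g k)) - (x * G - d)) ((x * G - d) - (x * G - d))"
    unfolding U_def
    by (intro mat_tendsto_diff[OF mat_tendsto_diff[OF V_lim D_lim] mat_tendsto_const])
      (use c D_carrier in \<open>auto intro: minus_carrier_mat\<close>)
  have "(\<lambda>k. ?e (g k)) \<longlonglongrightarrow> frob_dist_sq (x * G - d) (x * G - d)"
    unfolding frob_dist_sq_def
    by (rule mat_tendsto_frob_inner[where r=l and c=N, OF lim_diff lim_diff])
      (use c U_carrier in \<open>auto intro: minus_carrier_mat\<close>)
  then have sub: "(\<lambda>k. ?e (g k)) \<longlonglongrightarrow> 0"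
    using frob_dist_sq_self[of "x * G - d" l N] c by (simp add: minus_carrier_mat)
  have dec: "?e (Suc k) \<le> ?e k" for k
    using fejer_monotone[OF S, of k] frob_dist_sq_nonneg[of "U (Suc (Suc k))" "U (Suc k)"] by linarith
  have e: "?e \<longlonglongrightarrow> 0"
    by (rule decseq_tendsto_0_if_subseq[OF dec frob_dist_sq_nonneg g sub])
  have le: "frob_dist_sq (V (Suc k)) (x * G) \<le> ?e k" "frob_dist_sq (D (Suc k)) d \<le> ?e k" for k
    using saddle_point_dist_le[OF S, of k] frob_dist_sq_nonneg[of "V (Suc k)" "x * G"]
      frob_dist_sq_nonneg[of "D (Suc k)" d] by linarith+
  have "(\<lambda>k. frob_dist_sq (V (Suc k)) (x * G)) \<longlonglongrightarrow> 0"
    by (rule real_tendsto_sandwich[OF _ _ tendsto_const e]) (auto intro!: always_eventually simp: frob_dist_sq_nonneg le)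
  then have V_lim: "mat_tendsto (\<lambda>k. V (Suc k)) (x * G)"
    unfolding frob_dist_sq_def
    by (rule mat_tendsto_if_frob_dist_tendsto_0[where S="\<lambda>k. V (Suc k)", OF _ V_carrier c(2)])
  have dD: "D k - D (Suc k) \<in> carrier_mat l N" for k by (rule minus_carrier_mat[OF D_carrier])
  have sum_lim: "mat_tendsto (\<lambda>k. V (Suc k) + (D k - D (Suc k))) (x * G + 0\<^sub>m l N)"
    by (rule mat_tendsto_add[where r=l and c=N, OF V_lim increments_tendsto_0(2) dD c(2)]) simp
  have "mat_tendsto (\<lambda>k. (V (Suc k) + (D k - D (Suc k))) * H) ((x * G + 0\<^sub>m l N) * H)"
    by (rule mat_tendsto_mult_right[where r=l and c=N, OF sum_lim _ _ H]) (use dD c(2) in simp_all)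
  moreover have "(x * G + 0\<^sub>m l N) * H = x"
  proof -
    have "x * G + 0\<^sub>m l N = x * G" using c by (intro eq_matI) auto
    then show ?thesis using c G H by (simp add: G_H)
  qed
  ultimately have "mat_tendsto (\<lambda>k. X (Suc k)) x" by (simp only: X_eq)
  then have "mat_tendsto X x" by (simp only: mat_tendsto_Suc_iff)
  with c(1) show ?thesis by blast
qed

end

definition cblock :: "nat \<Rightarrow> nat \<Rightarrow> real mat \<Rightarrow> real mat" where
  "cblock n b A = mat (dim_row A) n (\<lambda>(i,j). A $$ (i, b * n + j))"

definition hstack :: "nat \<Rightarrow> nat \<Rightarrow> real mat list \<Rightarrow> real mat" where
  "hstack r n As = mat r (length As * n) (\<lambda>(i,j). As ! (j div n) $$ (i, j mod n))"

lemma block_index_lt: "b < m \<Longrightarrow> j < n \<Longrightarrow> b * n + j < m * (n :: nat)"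
proof -
  assume "b < m" "j < n"
  then have "b * n + j < (b + 1) * n" by simp
  also have "\<dots> \<le> m * n" using \<open>b < m\<close> by (intro mult_right_mono) auto
  finally show ?thesis .
qed

lemma cblock_carrier: "A \<in> carrier_mat r c \<Longrightarrow> cblock n b A \<in> carrier_mat r n"
  unfolding cblock_def by simp

lemma index_cblock [simp]:
  "i < dim_row A \<Longrightarrow> j < n \<Longrightarrow> cblock n b A $$ (i,j) = A $$ (i, b * n + j)"
  "dim_row (cblock n b A) = dim_row A" "dim_col (cblock n b A) = n"
  unfolding cblock_def by simp_all

lemma hstack_carrier: "hstack r n As \<in> carrier_mat r (length As * n)"
  unfolding hstack_def by simp

lemma cblock_hstack:
  assumes "b < length As" "\<And>A. A \<in> set As \<Longrightarrow> A \<in> carrier_mat r n"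
  shows "cblock n b (hstack r n As) = As ! b"
proof -
  have "As ! b \<in> carrier_mat r n" using assms by simp
  then show ?thesis
    using block_index_lt[OF assms(1)] unfolding hstack_def by (intro eq_matI) auto
qed

lemma mat_eq_if_cblocks_eq:
  assumes "A \<in> carrier_mat r (m * n)" "B \<in> carrier_mat r (m * n)"
    and "\<And>b. b < m \<Longrightarrow> cblock n b A = cblock n b B"
  shows "A = B"
proof (rule eq_matI)
  fix i j assume ij: "i < dim_row B" "j < dim_col B"
  then have jr: "i < r" "j < m * n" using assms(2) by auto
  then have "n > 0" by (cases n) auto
  then have "j div n < m" "j mod n < n" using jr by (auto simp: less_mult_imp_div_less)
  then have "cblock n (j div n) A $$ (i, j mod n) = cblock n (j div n) B $$ (i, j mod n)"
    using assms(3) by simp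
  then show "A $$ (i,j) = B $$ (i,j)" using assms jr(1) \<open>j mod n < n\<close> by simp
qed (use assms in auto)

lemma cblock_diff:
  "A \<in> carrier_mat r (m * n) \<Longrightarrow> B \<in> carrier_mat r (m * n) \<Longrightarrow> b < m \<Longrightarrow>
   cblock n b (A - B) = cblock n b A - cblock n b B"
  using block_index_lt by (intro eq_matI) auto

lemma cblock_mult:
  "X \<in> carrier_mat r' r \<Longrightarrow> A \<in> carrier_mat r (m * n) \<Longrightarrow> b < m \<Longrightarrow>
   cblock n b (X * A) = X * cblock n b A"
  using block_index_lt by (intro eq_matI) (auto simp: scalar_prod_def)

lemma frob_inner_cblocks:
  assumes "A \<in> carrier_mat r (m * n)" "B \<in> carrier_mat r (m * n)"
  shows "frob_inner A B = (\<Sum>b<m. frob_inner (cblock n b A) (cblock n b B))"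
  using assms block_index_lt unfolding frob_inner_def
  by (auto simp: sum_lessThan_mult_split sum.swap[of _ "{..<m}"] intro!: sum.cong)

lemma mult_transpose_cblocks:
  assumes "A \<in> carrier_mat r (m * n)" "B \<in> carrier_mat r' (m * n)"
  shows "A * transpose_mat B = msum r r' (\<lambda>b. cblock n b A * transpose_mat (cblock n b B)) {..<m}"
  using assms block_index_lt unfolding msum_def
  by (intro eq_matI) (auto simp: scalar_prod_def lessThan_atLeast0[symmetric] sum_lessThan_mult_split
      intro!: sum.cong)

lemma mat_tendsto_cblock:
  assumes "mat_tendsto S A" "\<And>k. S k \<in> carrier_mat r (m * n)" "A \<in> carrier_mat r (m * n)" "b < m"
  shows "mat_tendsto (\<lambda>k. cblock n b (S k)) (cblock n b A)"
proof -
  have [simp]: "dim_row (S k) = r" for k using assms(2)[of k] by simp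
  show ?thesis using assms block_index_lt unfolding mat_tendsto_def by auto
qed

lemma scalar_prod_self_nonneg: "0 \<le> (v :: real vec) \<bullet> v"
  unfolding scalar_prod_def by (auto intro!: sum_nonneg)

lemma vec_eq_0_if_scalar_prod_self_0: assumes "(v :: real vec) \<in> carrier_vec N" "v \<bullet> v = 0" shows "v = 0\<^sub>v N"
proof (rule eq_vecI)
  fix i assume i: "i < dim_vec (0\<^sub>v N)"
  have "v $ i * v $ i \<le> (\<Sum>i\<in>{0..<dim_vec v}. v $ i * v $ i)"
    by (rule member_le_sum) (use i assms in auto)
  then have "(v $ i)\<^sup>2 \<le> v \<bullet> v"
    unfolding scalar_prod_def by (simp add: power2_eq_square)
  then show "v $ i = 0\<^sub>v N $ i" using assms i by auto
qed (use assms in auto)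

lemma smult_mat_mult_vec: "A \<in> carrier_mat nr nc \<Longrightarrow> v \<in> carrier_vec nc \<Longrightarrow>
  (a \<cdot>\<^sub>m A) *\<^sub>v v = a \<cdot>\<^sub>v (A *\<^sub>v (v :: real vec))"
  by (intro eq_vecI) (auto simp: scalar_prod_def sum_distrib_left mult.assoc)

lemma scalar_prod_le_avg_squares: assumes "(a :: real vec) \<in> carrier_vec N" "b \<in> carrier_vec N"
  shows "a \<bullet> b \<le> (a \<bullet> a + b \<bullet> b) / 2"
proof -
  have "0 \<le> (a - b) \<bullet> (a - b)" by (rule scalar_prod_self_nonneg)
  also have "(a - b) \<bullet> (a - b) = a \<bullet> a - 2 * (a \<bullet> b) + b \<bullet> b"
    using assms by (simp add: minus_scalar_prod_distrib scalar_prod_minus_distrib comm_scalar_prod[of b N a])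
  finally show ?thesis by simp
qed

lemma wiener_filter_bounds:
  fixes C Ai :: "real mat" and s :: real
  assumes C: "C \<in> carrier_mat N N" and psd: "\<forall>v\<in>carrier_vec N. 0 \<le> v \<bullet> (C *\<^sub>v v)" and s: "s > 0"
    and Ai: "Ai \<in> carrier_mat N N" and inv: "(C + s \<cdot>\<^sub>m 1\<^sub>m N) * Ai = 1\<^sub>m N" and u: "u \<in> carrier_vec N"
  shows "(C * Ai *\<^sub>v u) \<bullet> (C * Ai *\<^sub>v u) \<le> u \<bullet> (C * Ai *\<^sub>v u)"
    and "u \<bullet> (C * Ai *\<^sub>v u) \<le> u \<bullet> u"
    and "u \<bullet> (C * Ai *\<^sub>v u) = u \<bullet> u \<Longrightarrow> u = 0\<^sub>v N"
proof -
  define y where "y = Ai *\<^sub>v u"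
  have y: "y \<in> carrier_vec N" using Ai u y_def by auto
  define c where "c = C *\<^sub>v y"
  have c: "c \<in> carrier_vec N" using C y c_def by auto
  have "u = ((C + s \<cdot>\<^sub>m 1\<^sub>m N) * Ai) *\<^sub>v u" using inv u by simp
  also have "\<dots> = (C + s \<cdot>\<^sub>m 1\<^sub>m N) *\<^sub>v y" using C Ai u y_def by (subst assoc_mult_mat_vec) auto
  also have "\<dots> = c + s \<cdot>\<^sub>v y" using C y c unfolding c_def
    by (subst add_mult_distrib_mat_vec[of _ N N]) (auto simp: smult_mat_mult_vec[of _ N N])
  finally have uc: "u = c + s \<cdot>\<^sub>v y" .
  have Gu: "C * Ai *\<^sub>v u = c" using C Ai u unfolding c_def y_def by simp
  have yc: "0 \<le> y \<bullet> c" using psd y c_def by auto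
  have cy: "c \<bullet> y = y \<bullet> c" using comm_scalar_prod[OF c y] .
  have e1: "u \<bullet> c = c \<bullet> c + s * (y \<bullet> c)"
    unfolding uc using c y by (simp add: add_scalar_prod_distrib)
  have e2: "u \<bullet> u = c \<bullet> c + 2 * s * (y \<bullet> c) + s * s * (y \<bullet> y)"
    unfolding uc using c y cy by (simp add: add_scalar_prod_distrib scalar_prod_add_distrib algebra_simps)
  have yy: "0 \<le> y \<bullet> y" by (rule scalar_prod_self_nonneg)
  show "(C * Ai *\<^sub>v u) \<bullet> (C * Ai *\<^sub>v u) \<le> u \<bullet> (C * Ai *\<^sub>v u)"
    unfolding Gu e1 using s yc by simp
  show "u \<bullet> (C * Ai *\<^sub>v u) \<le> u \<bullet> u"
    unfolding Gu e1 e2 using s yc yy by (simp add: mult_nonneg_nonneg)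
  assume "u \<bullet> (C * Ai *\<^sub>v u) = u \<bullet> u"
  then have "s * (y \<bullet> c) + s * s * (y \<bullet> y) = 0" unfolding Gu e1 e2 by simp
  then have "y \<bullet> y = 0" using s yc yy
    by (smt (verit, ccfv_SIG) mult_nonneg_nonneg mult_pos_pos)
  then have "y = 0\<^sub>v N" using vec_eq_0_if_scalar_prod_self_0 y by blast
  then show "u = 0\<^sub>v N" using uc c_def C by auto
qed


lemma square_convex_comb_le: fixes \<beta> g :: "'a \<Rightarrow> real"
  assumes "finite S" "\<forall>x\<in>S. 0 \<le> \<beta> x" "sum \<beta> S = 1"
  shows "(\<Sum>x\<in>S. \<beta> x * g x)\<^sup>2 \<le> (\<Sum>x\<in>S. \<beta> x * (g x)\<^sup>2)"
proof -
  define m where "m = (\<Sum>x\<in>S. \<beta> x * g x)"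
  have "0 \<le> (\<Sum>x\<in>S. \<beta> x * (g x - m)\<^sup>2)" using assms by (auto intro!: sum_nonneg)
  also have "\<dots> = (\<Sum>x\<in>S. \<beta> x * (g x)\<^sup>2) - 2 * m * (\<Sum>x\<in>S. \<beta> x * g x) + m\<^sup>2 * sum \<beta> S"
    by (simp add: power2_eq_square algebra_simps sum.distrib sum_subtractf sum_distrib_left sum_distrib_right)
  finally show ?thesis using assms(3) unfolding m_def[symmetric] by (simp add: power2_eq_square)
qed


lemma inv_mat_if_trivial_kernel:
  assumes A: "(A :: real mat) \<in> carrier_mat N N"
    and ker: "\<And>v. v \<in> carrier_vec N \<Longrightarrow> A *\<^sub>v v = 0\<^sub>v N \<Longrightarrow> v = 0\<^sub>v N"
  shows "inv_mat N A \<in> carrier_mat N N" "A * inv_mat N A = 1\<^sub>m N" "inv_mat N A * A = 1\<^sub>m N"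
proof -
  have "\<exists>Bi. Bi \<in> carrier_mat N N \<and> A * Bi = 1\<^sub>m N \<and> Bi * A = 1\<^sub>m N"
    by (rule mat_inverse_if_trivial_kernel[OF A ker])
  from someI_ex[OF this] show "inv_mat N A \<in> carrier_mat N N" "A * inv_mat N A = 1\<^sub>m N" "inv_mat N A * A = 1\<^sub>m N"
    unfolding inv_mat_def by auto
qed

lemma psd_shift_trivial_kernel:
  assumes C: "C \<in> carrier_mat N N" and psd: "\<forall>v\<in>carrier_vec N. 0 \<le> v \<bullet> (C *\<^sub>v v)"
    and s: "(s::real) > 0" and v: "v \<in> carrier_vec N" and z: "(C + s \<cdot>\<^sub>m 1\<^sub>m N) *\<^sub>v v = 0\<^sub>v N"
  shows "v = 0\<^sub>v N"
proof -
  have "(C + s \<cdot>\<^sub>m 1\<^sub>m N) *\<^sub>v v = C *\<^sub>v v + s \<cdot>\<^sub>v v"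
    using C v by (subst add_mult_distrib_mat_vec[of _ N N]) (auto simp: smult_mat_mult_vec[of _ N N])
  then have "0 = v \<bullet> (C *\<^sub>v v + s \<cdot>\<^sub>v v)" using z v by (metis scalar_prod_right_zero)
  also have "\<dots> = v \<bullet> (C *\<^sub>v v) + s * (v \<bullet> v)" using v C by (simp add: scalar_prod_add_distrib[of _ N])
  finally have "v \<bullet> v = 0" using psd v s scalar_prod_self_nonneg[of v]
    by (smt (verit) mult_pos_pos mult_nonneg_nonneg)
  then show "v = 0\<^sub>v N" using vec_eq_0_if_scalar_prod_self_0 v by blast
qed

lemma msum_mult_vec: assumes "\<forall>x\<in>S. f x \<in> carrier_mat n m" "v \<in> carrier_vec m" "finite S"
  shows "msum n m f S *\<^sub>v v = vec n (\<lambda>a. \<Sum>x\<in>S. (f x *\<^sub>v v) $ a)"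
proof (rule eq_vecI)
  fix a assume "a < dim_vec (vec n (\<lambda>a. \<Sum>x\<in>S. (f x *\<^sub>v v) $ a))"
  then have a: "a < n" by simp
  have "(msum n m f S *\<^sub>v v) $ a = (\<Sum>b<m. (\<Sum>x\<in>S. f x $$ (a,b)) * v $ b)"
    using a assms unfolding msum_def by (auto simp: scalar_prod_def lessThan_atLeast0)
  also have "\<dots> = (\<Sum>x\<in>S. \<Sum>b<m. f x $$ (a,b) * v $ b)"
    by (simp add: sum_distrib_right sum.swap[of _ S])
  also have "\<dots> = (\<Sum>x\<in>S. (f x *\<^sub>v v) $ a)"
    using a assms by (auto simp: scalar_prod_def lessThan_atLeast0 intro!: sum.cong)
  finally show "(msum n m f S *\<^sub>v v) $ a = vec n (\<lambda>a. \<Sum>x\<in>S. (f x *\<^sub>v v) $ a) $ a" using a by simp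
qed (auto simp: msum_def)


lemma gmm_F_bounds:
  fixes C :: "nat \<Rightarrow> real mat" and beta :: "nat \<Rightarrow> nat \<Rightarrow> real"
  assumes Cpsd: "\<forall>j<K. psd_mat N (C j)" and bnn: "\<forall>j<K. 0 \<le> beta j i"
    and bs: "(\<Sum>j<K. beta j i) = 1" and s: "s > 0" and u: "u \<in> carrier_vec N"
  shows "gmm_F N K C beta s i \<in> carrier_mat N N"
    "(gmm_F N K C beta s i *\<^sub>v u) \<bullet> (gmm_F N K C beta s i *\<^sub>v u) \<le> u \<bullet> (gmm_F N K C beta s i *\<^sub>v u)"
    "u \<bullet> (gmm_F N K C beta s i *\<^sub>v u) \<le> u \<bullet> u"
    "u \<bullet> (gmm_F N K C beta s i *\<^sub>v u) = u \<bullet> u \<Longrightarrow> u = 0\<^sub>v N"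
proof -
  define G where "G j = C j * inv_mat N (C j + s \<cdot>\<^sub>m 1\<^sub>m N)" for j
  define g where "g j = G j *\<^sub>v u" for j
  define F where "F = gmm_F N K C beta s i"
  have Cc: "C j \<in> carrier_mat N N" and Cp: "\<forall>v\<in>carrier_vec N. 0 \<le> v \<bullet> (C j *\<^sub>v v)" if "j < K" for j
    using Cpsd that unfolding psd_mat_def by auto
  have Ainv: "inv_mat N (C j + s \<cdot>\<^sub>m 1\<^sub>m N) \<in> carrier_mat N N"
      "(C j + s \<cdot>\<^sub>m 1\<^sub>m N) * inv_mat N (C j + s \<cdot>\<^sub>m 1\<^sub>m N) = 1\<^sub>m N" if "j < K" for j
    using inv_mat_if_trivial_kernel[OF _ psd_shift_trivial_kernel[OF Cc[OF that] Cp[OF that] s]] Cc[OF that] by auto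
  have Gc: "G j \<in> carrier_mat N N" if "j < K" for j using Ainv[OF that] Cc[OF that] unfolding G_def by auto
  have gc: "g j \<in> carrier_vec N" if "j < K" for j using Gc[OF that] u unfolding g_def by auto
  have gd: "dim_vec (g j) = N" if "j < K" for j using gc[OF that] by auto
  note GP = wiener_filter_bounds[OF Cc Cp s Ainv u, folded G_def, folded g_def]
  have Fc: "F \<in> carrier_mat N N" unfolding F_def gmm_F_def by (rule msum_carrier)
  then show "gmm_F N K C beta s i \<in> carrier_mat N N" unfolding F_def .
  have Fu: "F *\<^sub>v u = vec N (\<lambda>a. \<Sum>j<K. beta j i * g j $ a)"
    unfolding F_def gmm_F_def
    by (subst msum_mult_vec) (use Gc u in \<open>auto simp: G_def[symmetric] g_def smult_mat_mult_vec[of _ N N] intro!: eq_vecI sum.cong\<close>, subst index_smult_vec, use Gc in auto)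
  have e1: "u \<bullet> (F *\<^sub>v u) = (\<Sum>j<K. beta j i * (u \<bullet> g j))"
  proof -
    have "u \<bullet> (F *\<^sub>v u) = (\<Sum>a<N. u $ a * (\<Sum>j<K. beta j i * g j $ a))"
      unfolding Fu using u by (auto simp: scalar_prod_def lessThan_atLeast0)
    also have "\<dots> = (\<Sum>j<K. beta j i * (\<Sum>a<N. u $ a * g j $ a))"
      by (simp add: sum_distrib_left sum.swap[of _ "{..<K}"] algebra_simps)
    also have "\<dots> = (\<Sum>j<K. beta j i * (u \<bullet> g j))"
      using gd u by (auto simp: scalar_prod_def lessThan_atLeast0 intro!: sum.cong)
    finally show ?thesis .
  qed
  have e2: "(F *\<^sub>v u) \<bullet> (F *\<^sub>v u) \<le> (\<Sum>j<K. beta j i * (g j \<bullet> g j))"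
  proof -
    have "(F *\<^sub>v u) \<bullet> (F *\<^sub>v u) = (\<Sum>a<N. (\<Sum>j<K. beta j i * g j $ a)\<^sup>2)"
      unfolding Fu by (auto simp: scalar_prod_def lessThan_atLeast0 power2_eq_square)
    also have "\<dots> \<le> (\<Sum>a<N. \<Sum>j<K. beta j i * (g j $ a)\<^sup>2)"
      by (intro sum_mono square_convex_comb_le) (use bnn bs in auto)
    also have "\<dots> = (\<Sum>j<K. beta j i * (\<Sum>a<N. (g j $ a)\<^sup>2))"
      by (simp add: sum_distrib_left sum.swap[of _ "{..<K}"])
    also have "\<dots> = (\<Sum>j<K. beta j i * (g j \<bullet> g j))"
      using gd by (auto simp: scalar_prod_def lessThan_atLeast0 power2_eq_square intro!: sum.cong)
    finally show ?thesis .
  qed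
  have "(\<Sum>j<K. beta j i * (g j \<bullet> g j)) \<le> (\<Sum>j<K. beta j i * (u \<bullet> g j))"
    by (intro sum_mono mult_left_mono) (use GP(1) bnn in \<open>auto simp: g_def\<close>)
  with e1 e2 show "(gmm_F N K C beta s i *\<^sub>v u) \<bullet> (gmm_F N K C beta s i *\<^sub>v u) \<le> u \<bullet> (gmm_F N K C beta s i *\<^sub>v u)"
    unfolding F_def by linarith
  have le: "(\<Sum>j<K. beta j i * (u \<bullet> g j)) \<le> (\<Sum>j<K. beta j i * (u \<bullet> u))"
    by (intro sum_mono mult_left_mono) (use GP(2) bnn in \<open>auto simp: g_def\<close>)
  have uu: "(\<Sum>j<K. beta j i * (u \<bullet> u)) = u \<bullet> u" using bs by (simp add: sum_distrib_right[symmetric])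
  show "u \<bullet> (gmm_F N K C beta s i *\<^sub>v u) \<le> u \<bullet> u" using le uu e1 unfolding F_def by linarith
  assume eq: "u \<bullet> (gmm_F N K C beta s i *\<^sub>v u) = u \<bullet> u"
  have z: "(\<Sum>j<K. beta j i * (u \<bullet> u - u \<bullet> g j)) = 0"
    using eq e1 uu unfolding F_def by (simp add: algebra_simps sum_subtractf)
  have nn: "\<forall>j\<in>{..<K}. 0 \<le> beta j i * (u \<bullet> u - u \<bullet> g j)"
    using GP(2) bnn by (auto simp: g_def)
  have "\<exists>j<K. beta j i \<noteq> 0"
  proof (rule ccontr)
    assume "\<not> ?thesis" then have "\<forall>j<K. beta j i = 0" by blast
    then show False using bs by simp
  qed
  then obtain j where j: "j < K" "beta j i \<noteq> 0" by blast
  have "beta j i * (u \<bullet> u - u \<bullet> g j) = 0"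
    by (rule sum_nonneg_0[where s="{..<K}" and f="\<lambda>j. beta j i * (u \<bullet> u - u \<bullet> g j)"])
       (use z nn j(1) in auto)
  then have "u \<bullet> g j = u \<bullet> u" using j(2) by simp
  then show "u = 0\<^sub>v N" using GP(3)[of j] j(1) unfolding g_def by auto
qed

lemma mod_add_cancel: fixes x y a h :: nat assumes "x < h" "y < h" "(x + a) mod h = (y + a) mod h" shows "x = y"
proof -
  have *: "x = y" if "x \<le> y" "x < h" "y < h" "(x + a) mod h = (y + a) mod h" for x y
  proof -
    have "h dvd (y + a) - (x + a)" using that mod_eq_dvd_iff_nat[of "x+a" "y+a" h] by simp
    then have "h dvd y - x" by simp
    moreover have "y - x < h" using that by simp
    ultimately have "y - x = 0" using dvd_imp_le by (metis not_gr0 not_le)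
    then show ?thesis using that by simp
  qed
  show ?thesis using *[of x y] *[of y x] assms by (cases "x \<le> y") auto
qed

definition patch_pix :: "nat \<Rightarrow> nat \<Rightarrow> nat \<Rightarrow> nat \<Rightarrow> nat \<Rightarrow> nat" where
  "patch_pix h w p i u = pix w ((i div w + u div p) mod h) ((i mod w + u mod p) mod w)"

lemma pix_lt: "r < h \<Longrightarrow> c < w \<Longrightarrow> pix w r c < h * w"
proof -
  assume "r < h" "c < w"
  then have "r * w + c < r * w + w" by simp
  also have "\<dots> = (r + 1) * w" by simp
  also have "\<dots> \<le> h * w" using \<open>r < h\<close> by (intro mult_right_mono) auto
  finally show ?thesis unfolding pix_def .
qed

lemma patch_pix_lt: "0 < h \<Longrightarrow> 0 < w \<Longrightarrow> patch_pix h w p i u < h * w"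
  unfolding patch_pix_def by (rule pix_lt) auto

lemma patch_pix_inj: assumes h: "0 < h" and w: "0 < w"
  shows "inj_on (\<lambda>i. patch_pix h w p i u) {..<h*w}"
proof (rule inj_onI)
  fix i j assume i: "i \<in> {..<h*w}" and j: "j \<in> {..<h*w}" and e: "patch_pix h w p i u = patch_pix h w p j u"
  let ?r = "\<lambda>i. (i div w + u div p) mod h" and ?c = "\<lambda>i. (i mod w + u mod p) mod w"
  have cw: "?c i < w" "?c j < w" using w by auto
  have "patch_pix h w p i u div w = ?r i" "patch_pix h w p i u mod w = ?c i"
       "patch_pix h w p j u div w = ?r j" "patch_pix h w p j u mod w = ?c j"
    using cw unfolding patch_pix_def pix_def by auto
  then have r: "?r i = ?r j" and c: "?c i = ?c j" using e by metis+
  have "i div w < h" "j div w < h" using i j by (auto simp: less_mult_imp_div_less)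
  then have "i div w = j div w" using mod_add_cancel r by blast
  moreover have "i mod w = j mod w" using mod_add_cancel c w by (meson mod_less_divisor)
  ultimately show "i = j" by (metis div_mult_mod_eq)
qed

lemma patch_pix_image: assumes h: "0 < h" and w: "0 < w"
  shows "(\<lambda>i. patch_pix h w p i u) ` {..<h*w} = {..<h*w}"
  by (rule endo_inj_surj) (use patch_pix_inj[OF h w] patch_pix_lt[OF h w] in auto)

lemma sum_patch_pix: assumes h: "0 < h" and w: "0 < w"
  shows "(\<Sum>i<h*w. f (patch_pix h w p i u)) = (\<Sum>j<h*w. f j)"
proof -
  have "(\<Sum>j<h*w. f j) = (\<Sum>j\<in>(\<lambda>i. patch_pix h w p i u) ` {..<h*w}. f j)" using patch_pix_image[OF h w] by simp
  also have "\<dots> = (\<Sum>i<h*w. f (patch_pix h w p i u))" by (rule sum.reindex[OF patch_pix_inj[OF h w], unfolded comp_def])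
  finally show ?thesis by simp
qed

lemma patch_mat_carrier: "patch_mat h w p i \<in> carrier_mat (p*p) (h*w)"
  unfolding patch_mat_def by auto

lemma patch_mat_mult_vec: assumes h: "0 < h" and w: "0 < w" and z: "z \<in> carrier_vec (h*w)"
  shows "patch_mat h w p i *\<^sub>v z = vec (p*p) (\<lambda>u. z $ patch_pix h w p i u)"
proof (rule eq_vecI)
  fix u assume "u < dim_vec (vec (p*p) (\<lambda>u. z $ patch_pix h w p i u))"
  then have u: "u < p*p" by simp
  have "(patch_mat h w p i *\<^sub>v z) $ u = (\<Sum>j<h*w. (if j = patch_pix h w p i u then 1 else 0) * z $ j)"
    using u z unfolding patch_mat_def patch_pix_def by (auto simp: scalar_prod_def lessThan_atLeast0)
  also have "\<dots> = z $ patch_pix h w p i u" using patch_pix_lt[OF h w] by (simp add: if_distrib[of "\<lambda>x. x * _"] cong: if_cong)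
  finally show "(patch_mat h w p i *\<^sub>v z) $ u = vec (p*p) (\<lambda>u. z $ patch_pix h w p i u) $ u" using u by simp
qed (auto simp: patch_mat_def)

lemma sum_patch_sq: assumes h: "0 < h" and w: "0 < w" and z: "z \<in> carrier_vec (h*w)"
  shows "(\<Sum>i<h*w. (patch_mat h w p i *\<^sub>v z) \<bullet> (patch_mat h w p i *\<^sub>v z)) = real (p*p) * (z \<bullet> z)"
proof -
  have "(\<Sum>i<h*w. (patch_mat h w p i *\<^sub>v z) \<bullet> (patch_mat h w p i *\<^sub>v z))
      = (\<Sum>i<h*w. \<Sum>u<p*p. (z $ patch_pix h w p i u)\<^sup>2)"
    by (simp add: patch_mat_mult_vec[OF h w z] scalar_prod_def lessThan_atLeast0 power2_eq_square)
  also have "\<dots> = (\<Sum>u<p*p. \<Sum>i<h*w. (z $ patch_pix h w p i u)\<^sup>2)" by (rule sum.swap)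
  also have "\<dots> = (\<Sum>u<p*p. \<Sum>j<h*w. (z $ j)\<^sup>2)" using sum_patch_pix[OF h w, of "\<lambda>j. (z $ j)\<^sup>2"] by simp
  also have "\<dots> = real (p*p) * (z \<bullet> z)"
    using z by (simp add: scalar_prod_def lessThan_atLeast0 power2_eq_square)
  finally show ?thesis .
qed

lemma scalar_prod_msum_mult_vec: assumes "\<forall>x\<in>S. f x \<in> carrier_mat n m" "v \<in> carrier_vec m" "finite S" "z \<in> carrier_vec n"
  shows "z \<bullet> (msum n m f S *\<^sub>v v) = (\<Sum>x\<in>S. z \<bullet> (f x *\<^sub>v v))"
proof -
  have "z \<bullet> (msum n m f S *\<^sub>v v) = (\<Sum>a<n. z $ a * (\<Sum>x\<in>S. (f x *\<^sub>v v) $ a))"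
    unfolding msum_mult_vec[OF assms(1-3)] using assms(4) by (auto simp: scalar_prod_def lessThan_atLeast0)
  also have "\<dots> = (\<Sum>x\<in>S. \<Sum>a<n. z $ a * (f x *\<^sub>v v) $ a)"
    by (simp add: sum_distrib_left sum.swap[of _ S])
  also have "\<dots> = (\<Sum>x\<in>S. z \<bullet> (f x *\<^sub>v v))"
    using assms by (auto simp: scalar_prod_def lessThan_atLeast0 intro!: sum.cong)
  finally show ?thesis .
qed

lemma gmm_W_bounds:
  fixes C :: "nat \<Rightarrow> real mat" and beta :: "nat \<Rightarrow> nat \<Rightarrow> real"
  assumes h: "0 < h" and w: "0 < w" and p: "0 < p"
    and Cpsd: "\<forall>j<K. psd_mat (p*p) (C j)" and bnn: "\<forall>i<h*w. \<forall>j<K. 0 \<le> beta j i"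
    and bs: "\<forall>i<h*w. (\<Sum>j<K. beta j i) = 1" and s: "s > 0" and x: "x \<in> carrier_vec (h*w)"
  shows "gmm_W h w p K C beta s \<in> carrier_mat (h*w) (h*w)"
    "(gmm_W h w p K C beta s *\<^sub>v x) \<bullet> (gmm_W h w p K C beta s *\<^sub>v x) \<le> x \<bullet> (gmm_W h w p K C beta s *\<^sub>v x)"
    "gmm_W h w p K C beta s *\<^sub>v x = x \<Longrightarrow> x = 0\<^sub>v (h*w)"
proof -
  define n where "n = h * w"
  define np where "np = p * p"
  define P where "P i = patch_mat h w p i" for i
  define F where "F i = gmm_F np K C beta s i" for i
  define W where "W = gmm_W h w p K C beta s"
  have x': "x \<in> carrier_vec n" using x n_def by simp
  have np: "real np > 0" using p np_def by simp
  have Pc: "P i \<in> carrier_mat np n" for i unfolding P_def np_def n_def by (rule patch_mat_carrier)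
  have Fc: "F i \<in> carrier_mat np np" if "i < n" for i
    unfolding F_def np_def by (rule gmm_F_bounds(1)[where u="0\<^sub>v (p*p)"]) (use Cpsd bnn bs that s n_def in auto)
  have Wdef: "W = (1 / real np) \<cdot>\<^sub>m msum n n (\<lambda>i. transpose_mat (P i) * F i * P i) {..<n}"
    unfolding W_def gmm_W_def P_def F_def n_def np_def ..
  have Qc: "\<forall>i\<in>{..<n}. transpose_mat (P i) * F i * P i \<in> carrier_mat n n"
    using Pc Fc by (metis lessThan_iff mult_carrier_mat transpose_carrier_mat)
  have Wc: "W \<in> carrier_mat n n" unfolding Wdef by (simp add: msum_carrier)
  then show "gmm_W h w p K C beta s \<in> carrier_mat (h*w) (h*w)" unfolding W_def n_def .
  have Wz: "z \<bullet> (W *\<^sub>v x) = (1 / real np) * (\<Sum>i<n. (P i *\<^sub>v z) \<bullet> (F i *\<^sub>v (P i *\<^sub>v x)))"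
    if z: "z \<in> carrier_vec n" for z
  proof -
    have "z \<bullet> (W *\<^sub>v x) = (1 / real np) * (z \<bullet> (msum n n (\<lambda>i. transpose_mat (P i) * F i * P i) {..<n} *\<^sub>v x))"
    proof -
      have Wx: "W *\<^sub>v x = (1 / real np) \<cdot>\<^sub>v (msum n n (\<lambda>i. transpose_mat (P i) * F i * P i) {..<n} *\<^sub>v x)"
        unfolding Wdef by (rule smult_mat_mult_vec[OF msum_carrier x'])
      have d: "dim_vec z = dim_vec (msum n n (\<lambda>i. transpose_mat (P i) * F i * P i) {..<n} *\<^sub>v x)"
      proof -
        have mc: "msum n n (\<lambda>i. transpose_mat (P i) * F i * P i) {..<n} *\<^sub>v x \<in> carrier_vec n"
          by (rule mult_mat_vec_carrier[OF msum_carrier x'])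
        show ?thesis using carrier_vecD[OF z] carrier_vecD[OF mc] by simp
      qed
      show ?thesis unfolding Wx using scalar_prod_smult_right[OF d] by simp
    qed
    also have "\<dots> = (1 / real np) * (\<Sum>i<n. z \<bullet> ((transpose_mat (P i) * F i * P i) *\<^sub>v x))"
      by (subst scalar_prod_msum_mult_vec[OF Qc x']) (use z in auto)
    also have "\<dots> = (1 / real np) * (\<Sum>i<n. (P i *\<^sub>v z) \<bullet> (F i *\<^sub>v (P i *\<^sub>v x)))"
    proof -
      have "z \<bullet> ((transpose_mat (P i) * F i * P i) *\<^sub>v x) = (P i *\<^sub>v z) \<bullet> (F i *\<^sub>v (P i *\<^sub>v x))" if i: "i < n" for i
      proof -
        have "(transpose_mat (P i) * F i * P i) *\<^sub>v x = transpose_mat (P i) *\<^sub>v (F i *\<^sub>v (P i *\<^sub>v x))"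
        proof -
          have "(transpose_mat (P i) * F i * P i) *\<^sub>v x = (transpose_mat (P i) * F i) *\<^sub>v (P i *\<^sub>v x)"
            by (rule assoc_mult_mat_vec[of _ n np _ n]) (use Pc[of i] Fc[OF i] x' in auto)
          also have "\<dots> = transpose_mat (P i) *\<^sub>v (F i *\<^sub>v (P i *\<^sub>v x))"
            by (rule assoc_mult_mat_vec[of _ n np _ np]) (use Pc[of i] Fc[OF i] x' in auto)
          finally show ?thesis .
        qed
        moreover have "z \<bullet> (transpose_mat (P i) *\<^sub>v (F i *\<^sub>v (P i *\<^sub>v x))) = (F i *\<^sub>v (P i *\<^sub>v x)) \<bullet> (P i *\<^sub>v z)"
          using transpose_vec_mult_scalar[OF Pc[of i] z, of "F i *\<^sub>v (P i *\<^sub>v x)"] Pc[of i] Fc[OF i] x' z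
          by (subst comm_scalar_prod[of _ n]) auto
        ultimately show ?thesis using Pc[of i] Fc[OF i] x' z by (simp add: comm_scalar_prod[of _ np])
      qed
      then show ?thesis by simp
    qed
    finally show ?thesis .
  qed
  define u where "u i = P i *\<^sub>v x" for i
  have uc: "u i \<in> carrier_vec np" for i unfolding u_def by (rule mult_mat_vec_carrier[OF Pc x'])
  have Fu: "F i *\<^sub>v u i \<in> carrier_vec np" if "i < n" for i using Fc[OF that] uc by auto
  have F1: "(F i *\<^sub>v u i) \<bullet> (F i *\<^sub>v u i) \<le> u i \<bullet> (F i *\<^sub>v u i)"
   and F2: "u i \<bullet> (F i *\<^sub>v u i) \<le> u i \<bullet> u i"
   and F3: "u i \<bullet> (F i *\<^sub>v u i) = u i \<bullet> u i \<Longrightarrow> u i = 0\<^sub>v np" if "i < n" for i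
    unfolding F_def np_def
    by (rule gmm_F_bounds(2), use Cpsd bnn bs that s n_def uc np_def in auto)
       (rule gmm_F_bounds(3), use Cpsd bnn bs that s n_def uc np_def in auto,
        rule gmm_F_bounds(4), use Cpsd bnn bs that s n_def uc np_def in auto)
  have xWx: "x \<bullet> (W *\<^sub>v x) = (1 / real np) * (\<Sum>i<n. u i \<bullet> (F i *\<^sub>v u i))"
    using Wz[OF x'] unfolding u_def .
  have psum: "(\<Sum>i<n. (P i *\<^sub>v z) \<bullet> (P i *\<^sub>v z)) = real np * (z \<bullet> z)" if "z \<in> carrier_vec n" for z
    using sum_patch_sq[OF h w, of z p] that unfolding P_def n_def np_def by simp
  {
    define z where "z = W *\<^sub>v x"
    have z: "z \<in> carrier_vec n" using Wc x' z_def by auto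
    have "z \<bullet> z = (1 / real np) * (\<Sum>i<n. (P i *\<^sub>v z) \<bullet> (F i *\<^sub>v u i))"
      using Wz[OF z] unfolding z_def u_def by simp
    also have "\<dots> \<le> (1 / real np) * (\<Sum>i<n. ((P i *\<^sub>v z) \<bullet> (P i *\<^sub>v z) + (F i *\<^sub>v u i) \<bullet> (F i *\<^sub>v u i)) / 2)"
      using np mult_mat_vec_carrier[OF Pc z] Fu by (intro mult_left_mono sum_mono scalar_prod_le_avg_squares[of _ np]) auto
    also have "\<dots> \<le> (1 / real np) * (\<Sum>i<n. ((P i *\<^sub>v z) \<bullet> (P i *\<^sub>v z) + u i \<bullet> (F i *\<^sub>v u i)) / 2)"
      using np F1 by (intro mult_left_mono sum_mono) auto
    also have "\<dots> = (1 / real np) * ((\<Sum>i<n. (P i *\<^sub>v z) \<bullet> (P i *\<^sub>v z)) + (\<Sum>i<n. u i \<bullet> (F i *\<^sub>v u i))) / 2"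
      by (simp add: sum.distrib sum_divide_distrib[symmetric])
    also have "\<dots> = (z \<bullet> z) / 2 + (x \<bullet> (W *\<^sub>v x)) / 2"
      unfolding psum[OF z] xWx using np by (simp add: field_simps)
    finally have "z \<bullet> z \<le> x \<bullet> (W *\<^sub>v x)" by simp
    then show "(gmm_W h w p K C beta s *\<^sub>v x) \<bullet> (gmm_W h w p K C beta s *\<^sub>v x) \<le> x \<bullet> (gmm_W h w p K C beta s *\<^sub>v x)"
      unfolding z_def W_def .
  }
  assume fx: "gmm_W h w p K C beta s *\<^sub>v x = x"
  then have "x \<bullet> x = (1 / real np) * (\<Sum>i<n. u i \<bullet> (F i *\<^sub>v u i))" using xWx fx unfolding W_def by simp
  moreover have uu: "(\<Sum>i<n. u i \<bullet> u i) = real np * (x \<bullet> x)" using psum[OF x'] unfolding u_def .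
  ultimately have z0: "(\<Sum>i<n. u i \<bullet> u i - u i \<bullet> (F i *\<^sub>v u i)) = 0"
    using np by (simp add: sum_subtractf field_simps)
  have nn0: "\<And>i. i \<in> {..<n} \<Longrightarrow> 0 \<le> u i \<bullet> u i - u i \<bullet> (F i *\<^sub>v u i)" using F2 by auto
  have "\<forall>i\<in>{..<n}. u i \<bullet> u i - u i \<bullet> (F i *\<^sub>v u i) = 0"
    using sum_nonneg_eq_0_iff[where A="{..<n}" and f="\<lambda>i. u i \<bullet> u i - u i \<bullet> (F i *\<^sub>v u i)", OF finite_lessThan nn0] z0
    by simp
  then have "\<forall>i<n. u i = 0\<^sub>v np" using F3 by auto
  then have "(\<Sum>i<n. u i \<bullet> u i) = 0" by simp
  then have "x \<bullet> x = 0" using uu np by simp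
  then show "x = 0\<^sub>v (h*w)" using vec_eq_0_if_scalar_prod_self_0 x by blast
qed


lemma transpose_mult_transpose: "(W :: real mat) \<in> carrier_mat n n \<Longrightarrow> Z \<in> carrier_mat l n \<Longrightarrow>
  transpose_mat (W * transpose_mat Z) = Z * transpose_mat W"
  using transpose_mult[of W n n "transpose_mat Z" l] by auto

lemma row_mult_transpose: assumes "(W :: real mat) \<in> carrier_mat n n" "Y \<in> carrier_mat l n" "i < l"
  shows "row (Y * transpose_mat W) i = W *\<^sub>v row Y i"
proof (rule eq_vecI)
  fix j assume "j < dim_vec (W *\<^sub>v row Y i)"
  then have j: "j < n" using assms by simp
  show "row (Y * transpose_mat W) i $ j = (W *\<^sub>v row Y i) $ j"
    using comm_scalar_prod[of "row Y i" n "row W j"] assms j by auto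
qed (use assms in auto)

lemma gmm_W_rows_bounds:
  fixes C :: "nat \<Rightarrow> real mat" and beta :: "nat \<Rightarrow> nat \<Rightarrow> real"
  assumes h: "0 < h" and w: "0 < w" and p: "0 < p"
    and Cpsd: "\<forall>j<K. psd_mat (p*p) (C j)" and bnn: "\<forall>i<h*w. \<forall>j<K. 0 \<le> beta j i"
    and bs: "\<forall>i<h*w. (\<Sum>j<K. beta j i) = 1" and s: "s > 0"
    and Y: "Y \<in> carrier_mat l (h*w)"
  shows "frob_inner (Y * transpose_mat (gmm_W h w p K C beta s)) (Y * transpose_mat (gmm_W h w p K C beta s))
         \<le> frob_inner Y (Y * transpose_mat (gmm_W h w p K C beta s))"
    "Y * transpose_mat (gmm_W h w p K C beta s) = Y \<Longrightarrow> Y = 0\<^sub>m l (h*w)"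
proof -
  define W where "W = gmm_W h w p K C beta s"
  note WP = gmm_W_bounds[OF h w p Cpsd bnn bs s, folded W_def]
  have Wc: "W \<in> carrier_mat (h*w) (h*w)" using WP(1)[of "0\<^sub>v (h*w)"] by auto
  have YW: "Y * transpose_mat W \<in> carrier_mat l (h*w)" using Wc Y by auto
  have rY: "row Y i \<in> carrier_vec (h*w)" if "i < l" for i using Y that by auto
  have "frob_inner (Y * transpose_mat W) (Y * transpose_mat W) = (\<Sum>i<l. (W *\<^sub>v row Y i) \<bullet> (W *\<^sub>v row Y i))"
    by (subst frob_inner_rows[OF YW YW]) (use row_mult_transpose[OF Wc Y] in simp)
  also have "\<dots> \<le> (\<Sum>i<l. row Y i \<bullet> (W *\<^sub>v row Y i))"
    by (intro sum_mono WP(2)) (use rY in auto)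
  also have "\<dots> = frob_inner Y (Y * transpose_mat W)"
    by (subst frob_inner_rows[OF Y YW]) (use row_mult_transpose[OF Wc Y] in simp)
  finally show "frob_inner (Y * transpose_mat (gmm_W h w p K C beta s)) (Y * transpose_mat (gmm_W h w p K C beta s))
         \<le> frob_inner Y (Y * transpose_mat (gmm_W h w p K C beta s))" unfolding W_def .
  assume e: "Y * transpose_mat (gmm_W h w p K C beta s) = Y"
  show "Y = 0\<^sub>m l (h*w)"
  proof (rule eq_matI)
    fix i j assume i: "i < dim_row (0\<^sub>m l (h*w))" and j: "j < dim_col (0\<^sub>m l (h*w))"
    have "W *\<^sub>v row Y i = row Y i" using row_mult_transpose[OF Wc Y, of i] e i unfolding W_def by simp
    then have "row Y i = 0\<^sub>v (h*w)" using WP(3) rY i by auto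
    then have "row Y i $ j = 0" using j by simp
    then show "Y $$ (i,j) = 0\<^sub>m l (h*w) $$ (i,j)" using i j Y by auto
  qed (use Y in auto)
qed

lemma affine_relation_monotone:
  assumes L: "mat_linear r c r c L" and L_psd: "\<And>Z. Z \<in> carrier_mat r c \<Longrightarrow> 0 \<le> frob_inner Z (L Z)"
    and rho: "0 < rho"
    and c: "v \<in> carrier_mat r c" "d \<in> carrier_mat r c" "v' \<in> carrier_mat r c" "d' \<in> carrier_mat r c"
    and eq: "L v + rho \<cdot>\<^sub>m d = C" "L v' + rho \<cdot>\<^sub>m d' = C"
  shows "frob_inner (v - v') (d - d') \<le> 0"
proof -
  define z where "z = v - v'"
  have z: "z \<in> carrier_mat r c" unfolding z_def using c by (simp add: minus_carrier_mat)
  have Lc: "L v \<in> carrier_mat r c" "L v' \<in> carrier_mat r c" using mat_linearD(1)[OF L] c by auto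
  have "frob_inner z (L v) + rho * frob_inner z d = frob_inner z (L v') + rho * frob_inner z d'"
    using arg_cong[OF eq(1), of "frob_inner z"] arg_cong[OF eq(2), of "frob_inner z"] z Lc c
    by (simp add: frob_inner_add_right[of _ r c] frob_inner_smult_right[of _ r c])
  moreover have "L z = L v - L v'" unfolding z_def by (rule mat_linear_diff[OF L c(1,3)])
  then have "frob_inner z (L z) = frob_inner z (L v) - frob_inner z (L v')"
    using z Lc by (simp add: frob_inner_diff_right[of _ r c])
  ultimately have "rho * frob_inner z (d - d') = - frob_inner z (L z)"
    using z c by (simp add: frob_inner_diff_right algebra_simps)
  then have "rho * frob_inner z (d - d') \<le> 0" using L_psd[OF z] by simp
  then show ?thesis unfolding z_def using rho by (simp add: mult_le_0_iff)
qed

lemma affine_relation_closed: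
  assumes L: "mat_linear r c r c L"
    and eq: "\<And>k. L (S k) + rho \<cdot>\<^sub>m T k = C"
    and lim: "mat_tendsto S v" "mat_tendsto T d"
    and c: "\<And>k. S k \<in> carrier_mat r c" "\<And>k. T k \<in> carrier_mat r c" "v \<in> carrier_mat r c"
      "d \<in> carrier_mat r c"
  shows "L v + rho \<cdot>\<^sub>m d = C"
proof -
  have "mat_tendsto (\<lambda>k. L (S k) + rho \<cdot>\<^sub>m T k) (L v + rho \<cdot>\<^sub>m d)"
    by (rule mat_tendsto_add[where r=r and c=c, OF mat_tendsto_linear[OF L lim(1) c(1,3)]
          mat_tendsto_smult[OF lim(2) c(2,4)]])
      (use c mat_linearD(1)[OF L] in auto)
  then have "mat_tendsto (\<lambda>k. C) (L v + rho \<cdot>\<^sub>m d)" by (simp only: eq)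
  moreover have "C \<in> carrier_mat r c" unfolding eq[of 0, symmetric] using c(2) by simp
  ultimately show ?thesis
    using mat_tendsto_const_iff[of "L v + rho \<cdot>\<^sub>m d" r c C] mat_linearD(1)[OF L c(3)] c(4) by simp
qed

lemma fixed_point_relation_monotone:
  assumes firm: "\<And>Y. Y \<in> carrier_mat r c \<Longrightarrow> frob_inner (Y * W) (Y * W) \<le> frob_inner Y (Y * W)"
    and W: "W \<in> carrier_mat c c"
    and cv: "v \<in> carrier_mat r c" "d \<in> carrier_mat r c" "v' \<in> carrier_mat r c" "d' \<in> carrier_mat r c"
    and eq: "v = (v - d) * W" "v' = (v' - d') * W"
  shows "frob_inner (v - v') (d - d') \<le> 0"
proof -
  define y where "y = (v - d) - (v' - d')"
  have y: "y \<in> carrier_mat r c" "y * W \<in> carrier_mat r c" unfolding y_def using cv W by (auto intro: minus_carrier_mat)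
  have "y * W = (v - d) * W - (v' - d') * W"
    unfolding y_def by (rule minus_mult_distrib_mat) (use cv W in \<open>auto intro: minus_carrier_mat\<close>)
  then have vv: "v - v' = y * W" by (simp only: eq(1)[symmetric] eq(2)[symmetric])
  have "d - d' = (v - v') - y" unfolding y_def using cv by (intro eq_matI) auto
  then have dd: "d - d' = y * W - y" by (simp only: vv)
  show ?thesis
    unfolding vv dd using firm[OF y(1)] y frob_inner_commute[OF y] by (simp add: frob_inner_diff_right)
qed

lemma fixed_point_relation_closed:
  assumes eq: "\<And>k. S k = (S k - T k) * W" and lim: "mat_tendsto S v" "mat_tendsto T d"
    and c: "\<And>k. T k \<in> carrier_mat r c" "v \<in> carrier_mat r c" "d \<in> carrier_mat r c" "W \<in> carrier_mat c c"
  shows "v = (v - d) * W"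
proof -
  have lim_W: "mat_tendsto (\<lambda>k. (S k - T k) * W) ((v - d) * W)"
    by (rule mat_tendsto_mult_right[OF mat_tendsto_diff[OF lim c(1-3)] _ _ c(4)])
      (use c in \<open>auto intro: minus_carrier_mat\<close>)
  have S_eq: "S = (\<lambda>k. (S k - T k) * W)" using eq by (intro ext)
  have "mat_tendsto S ((v - d) * W)" by (subst S_eq) (rule lim_W)
  then show ?thesis
    by (rule mat_tendsto_unique[OF lim(1) _ c(2) mult_carrier_mat[OF minus_carrier_mat[OF c(3)] c(4)]])
qed

locale salsa_sharpening =
  fixes l n Lh Lm nh :: nat
    and Yh Ym B M RE E Wt :: "real mat"
    and rho lambda :: real
  assumes Yh: "Yh \<in> carrier_mat Lh nh" and Ym: "Ym \<in> carrier_mat Lm n"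
    and B: "B \<in> carrier_mat n n" and M: "M \<in> carrier_mat n nh"
    and RE: "RE \<in> carrier_mat Lm l" and E: "E \<in> carrier_mat Lh l" and Wt: "Wt \<in> carrier_mat n n"
    and rho: "0 < rho" and lambda: "0 < lambda"
    and Wt_firmly_nonexpansive:
      "\<And>Y. Y \<in> carrier_mat l n \<Longrightarrow> frob_inner (Y * Wt) (Y * Wt) \<le> frob_inner Y (Y * Wt)"
    and Wt_fixed_point: "\<And>Y. Y \<in> carrier_mat l n \<Longrightarrow> Y * Wt = Y \<Longrightarrow> Y = 0\<^sub>m l n"
begin

definition L1 :: "real mat \<Rightarrow> real mat" where
  "L1 Z = transpose_mat E * (E * Z * M) * transpose_mat M"

definition L2 :: "real mat \<Rightarrow> real mat" where
  "L2 Z = lambda \<cdot>\<^sub>m (transpose_mat RE * (RE * Z))"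

definition R1 :: "real mat \<Rightarrow> real mat \<Rightarrow> bool" where
  "R1 v d \<longleftrightarrow> v \<in> carrier_mat l n \<and> d \<in> carrier_mat l n \<and>
     L1 v + rho \<cdot>\<^sub>m d = transpose_mat E * Yh * transpose_mat M"

definition R2 :: "real mat \<Rightarrow> real mat \<Rightarrow> bool" where
  "R2 v d \<longleftrightarrow> v \<in> carrier_mat l n \<and> d \<in> carrier_mat l n \<and>
     L2 v + rho \<cdot>\<^sub>m d = lambda \<cdot>\<^sub>m (transpose_mat RE * Ym)"

definition R3 :: "real mat \<Rightarrow> real mat \<Rightarrow> bool" where
  "R3 v d \<longleftrightarrow> v \<in> carrier_mat l n \<and> d \<in> carrier_mat l n \<and> v = (v - d) * Wt"

lemma R1_carrier: "R1 v d \<Longrightarrow> v \<in> carrier_mat l n \<and> d \<in> carrier_mat l n"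
  unfolding R1_def by (elim conjE) (rule conjI)

lemma R2_carrier: "R2 v d \<Longrightarrow> v \<in> carrier_mat l n \<and> d \<in> carrier_mat l n"
  unfolding R2_def by (elim conjE) (rule conjI)

lemma R3_carrier: "R3 v d \<Longrightarrow> v \<in> carrier_mat l n \<and> d \<in> carrier_mat l n"
  unfolding R3_def by (elim conjE) (rule conjI)

lemma L1_linear: "mat_linear l n l n L1"
proof -
  have "mat_linear l n l n (\<lambda>Z. transpose_mat E * (E * Z * M) * transpose_mat M)"
    by (intro mat_linear_comp[OF mat_linear_comp[OF mat_linear_comp[OF mat_linear_mult_left[OF E]
          mat_linear_mult_right[OF M]] mat_linear_mult_left] mat_linear_mult_right])
      (use E M in simp_all)
  then show ?thesis unfolding L1_def[abs_def] .
qed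

lemma L2_linear: "mat_linear l n l n L2"
proof -
  have "mat_linear l n l n (\<lambda>Z. lambda \<cdot>\<^sub>m (transpose_mat RE * (RE * Z)))"
    by (intro mat_linear_smult mat_linear_comp[OF mat_linear_mult_left[OF RE] mat_linear_mult_left])
      (use RE in simp)
  then show ?thesis unfolding L2_def[abs_def] .
qed

lemma frob_inner_L1: "Z \<in> carrier_mat l n \<Longrightarrow> frob_inner Z (L1 Z) = frob_inner (E * Z * M) (E * Z * M)"
proof -
  assume Z: "Z \<in> carrier_mat l n"
  have EZM: "E * Z * M \<in> carrier_mat Lh nh" using E Z M by simp
  have "frob_inner (E * Z * M) (E * Z * M) = frob_inner (E * Z) (E * Z * M * transpose_mat M)"
    by (rule frob_inner_mult_right[OF M _ EZM]) (use E Z in simp)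
  also have "\<dots> = frob_inner Z (transpose_mat E * (E * Z * M * transpose_mat M))"
    by (rule frob_inner_mult_left[OF E Z]) (use EZM M in simp)
  also have "\<dots> = frob_inner Z (L1 Z)"
  proof -
    have "transpose_mat E \<in> carrier_mat l Lh" "transpose_mat M \<in> carrier_mat nh n" using E M by simp_all
    then show ?thesis unfolding L1_def by (simp only: assoc_mult_mat[OF _ EZM])
  qed
  finally show ?thesis ..
qed

lemma frob_inner_L2: "Z \<in> carrier_mat l n \<Longrightarrow> frob_inner Z (L2 Z) = lambda * frob_inner (RE * Z) (RE * Z)"
proof -
  assume Z: "Z \<in> carrier_mat l n"
  have "frob_inner (RE * Z) (RE * Z) = frob_inner Z (transpose_mat RE * (RE * Z))"
    by (rule frob_inner_mult_left[OF RE Z]) (use RE Z in simp)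
  then show ?thesis
    unfolding L2_def using RE Z by (simp add: frob_inner_smult_right[of _ l n])
qed

lemma R1_monotone: "R1 v d \<Longrightarrow> R1 v' d' \<Longrightarrow> frob_inner (v - v') (d - d') \<le> 0"
  unfolding R1_def
  by (elim conjE, rule affine_relation_monotone[OF L1_linear _ rho])
    (simp_all add: frob_inner_L1 frob_inner_self_nonneg)

lemma R2_monotone: "R2 v d \<Longrightarrow> R2 v' d' \<Longrightarrow> frob_inner (v - v') (d - d') \<le> 0"
  unfolding R2_def
  by (elim conjE, rule affine_relation_monotone[OF L2_linear _ rho])
    (auto simp: frob_inner_L2 intro!: mult_nonneg_nonneg frob_inner_self_nonneg less_imp_le[OF lambda])

lemma R3_monotone: "R3 v d \<Longrightarrow> R3 v' d' \<Longrightarrow> frob_inner (v - v') (d - d') \<le> 0"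
  unfolding R3_def by (elim conjE, rule fixed_point_relation_monotone[OF Wt_firmly_nonexpansive Wt])

lemma R1_closed:
  assumes R: "\<And>k. R1 (S k) (T k)" and lim: "mat_tendsto S v" "mat_tendsto T d"
    and c: "v \<in> carrier_mat l n" "d \<in> carrier_mat l n"
  shows "R1 v d"
proof -
  have Sc: "S k \<in> carrier_mat l n" and Tc: "T k \<in> carrier_mat l n"
    and eq: "L1 (S k) + rho \<cdot>\<^sub>m T k = transpose_mat E * Yh * transpose_mat M" for k
    using R[of k] unfolding R1_def by auto
  show ?thesis unfolding R1_def using affine_relation_closed[OF L1_linear eq lim Sc Tc c] c by simp
qed

lemma R2_closed:
  assumes R: "\<And>k. R2 (S k) (T k)" and lim: "mat_tendsto S v" "mat_tendsto T d"
    and c: "v \<in> carrier_mat l n" "d \<in> carrier_mat l n"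
  shows "R2 v d"
proof -
  have Sc: "S k \<in> carrier_mat l n" and Tc: "T k \<in> carrier_mat l n"
    and eq: "L2 (S k) + rho \<cdot>\<^sub>m T k = lambda \<cdot>\<^sub>m (transpose_mat RE * Ym)" for k
    using R[of k] unfolding R2_def by auto
  show ?thesis unfolding R2_def using affine_relation_closed[OF L2_linear eq lim Sc Tc c] c by simp
qed

lemma R3_closed:
  assumes R: "\<And>k. R3 (S k) (T k)" and lim: "mat_tendsto S v" "mat_tendsto T d"
    and c: "v \<in> carrier_mat l n" "d \<in> carrier_mat l n"
  shows "R3 v d"
proof -
  have Tc: "T k \<in> carrier_mat l n" and eq: "S k = (S k - T k) * Wt" for k
    using R[of k] unfolding R3_def by blast+
  show ?thesis unfolding R3_def by (intro conjI c fixed_point_relation_closed[OF eq lim Tc c Wt])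
qed

end

lemma msum_lessThan_3:
  fixes f :: "nat \<Rightarrow> real mat"
  assumes "f 0 \<in> carrier_mat r c" "f 1 \<in> carrier_mat r c" "f 2 \<in> carrier_mat r c"
  shows "msum r c f {..<3} = f 0 + f 1 + f 2"
  using assms unfolding msum_def by (intro eq_matI) (auto simp: numeral_3_eq_3 numeral_2_eq_2)

context salsa_sharpening
begin

definition saddle_operator :: "real mat \<Rightarrow> real mat" where
  "saddle_operator Y = L1 (Y * Wt * B) * transpose_mat B + L2 (Y * Wt) + rho \<cdot>\<^sub>m (Y - Y * Wt)"

lemma saddle_operator_linear: "mat_linear l n l n saddle_operator"
proof -
  have WtB: "mat_linear l n l n (\<lambda>Y. Y * Wt * B)"
    by (rule mat_linear_comp[OF mat_linear_mult_right[OF Wt] mat_linear_mult_right[OF B]])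
  have "mat_linear l n l n (\<lambda>Y. L1 (Y * Wt * B) * transpose_mat B)"
    by (rule mat_linear_comp[OF mat_linear_comp[OF WtB L1_linear] mat_linear_mult_right]) (use B in simp)
  moreover have "mat_linear l n l n (\<lambda>Y. L2 (Y * Wt))"
    by (rule mat_linear_comp[OF mat_linear_mult_right[OF Wt] L2_linear])
  moreover have "mat_linear l n l n (\<lambda>Y. rho \<cdot>\<^sub>m (Y - Y * Wt))"
    by (intro mat_linear_smult mat_linear_diff_fun mat_linear_ident mat_linear_mult_right[OF Wt])
  ultimately show ?thesis
    unfolding saddle_operator_def[abs_def] by (intro mat_linear_add)
qed

lemma saddle_operator_inj:
  assumes Y: "Y \<in> carrier_mat l n" and zero: "saddle_operator Y = 0\<^sub>m l n"
  shows "Y = 0\<^sub>m l n"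
proof -
  define Z where "Z = Y * Wt"
  have Z: "Z \<in> carrier_mat l n" "Z * B \<in> carrier_mat l n" unfolding Z_def using Y Wt B by simp_all
  have L1ZB: "L1 (Z * B) \<in> carrier_mat l n" and L2Z: "L2 Z \<in> carrier_mat l n"
    using mat_linearD(1)[OF L1_linear Z(2)] mat_linearD(1)[OF L2_linear Z(1)] .
  have EZBM: "E * (Z * B) * M \<in> carrier_mat Lh nh" and REZ: "RE * Z \<in> carrier_mat Lm n"
    using E M RE Z by simp_all
  have term1: "frob_inner (L1 (Z * B) * transpose_mat B) Z = frob_inner (E * (Z * B) * M) (E * (Z * B) * M)"
    using frob_inner_mult_right[of "transpose_mat B" n n "L1 (Z * B)" l Z] B L1ZB Z
      frob_inner_commute[OF L1ZB Z(2)] frob_inner_L1[OF Z(2)] by simp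
  have term2: "frob_inner (L2 Z) Z = lambda * frob_inner (RE * Z) (RE * Z)"
    using frob_inner_commute[OF L2Z Z(1)] frob_inner_L2[OF Z(1)] by simp
  have term3: "frob_inner (rho \<cdot>\<^sub>m (Y - Z)) Z = rho * (frob_inner Y Z - frob_inner Z Z)"
    using Y Z by (simp add: frob_inner_smult_left[of _ l n] frob_inner_diff_left[of _ l n] minus_carrier_mat)
  have "frob_inner (saddle_operator Y) Z = frob_inner (E * (Z * B) * M) (E * (Z * B) * M)
      + lambda * frob_inner (RE * Z) (RE * Z) + rho * (frob_inner Y Z - frob_inner Z Z)"
    unfolding saddle_operator_def Z_def[symmetric] term1[symmetric] term2[symmetric] term3[symmetric]
    using L1ZB L2Z Y Z B
    by (simp add: frob_inner_add_left[of _ l n] minus_carrier_mat)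
  moreover have "frob_inner (saddle_operator Y) Z = 0" using zero Z by (simp add: frob_inner_zero_left)
  moreover have "frob_inner Z Z \<le> frob_inner Y Z" using Wt_firmly_nonexpansive[OF Y] unfolding Z_def .
  ultimately have "frob_inner (E * (Z * B) * M) (E * (Z * B) * M) = 0" "frob_inner (RE * Z) (RE * Z) = 0"
    using frob_inner_self_nonneg[of "E * (Z * B) * M"] frob_inner_self_nonneg[of "RE * Z"] rho lambda
    by (smt (verit) mult_nonneg_nonneg mult_pos_pos)+
  then have "E * (Z * B) * M = 0\<^sub>m Lh nh" "RE * Z = 0\<^sub>m Lm n"
    using frob_inner_self_eq_0_iff[OF EZBM] frob_inner_self_eq_0_iff[OF REZ] by simp_all
  then have "L1 (Z * B) = 0\<^sub>m l n" "L2 Z = 0\<^sub>m l n"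
    unfolding L1_def L2_def using E M RE by (auto intro!: eq_matI)
  then have "saddle_operator Y = 0\<^sub>m l n * transpose_mat B + 0\<^sub>m l n + rho \<cdot>\<^sub>m (Y - Z)"
    unfolding saddle_operator_def Z_def[symmetric] by (simp only:)
  also have "\<dots> = rho \<cdot>\<^sub>m (Y - Z)" using B Y Z by (intro eq_matI) (simp_all add: minus_carrier_mat)
  finally have diff0: "rho \<cdot>\<^sub>m (Y - Z) = 0\<^sub>m l n" using zero by simp
  have "Z = Y"
  proof (rule eq_matI)
    fix i j assume ij: "i < dim_row Y" "j < dim_col Y"
    then have "rho * (Y $$ (i,j) - Z $$ (i,j)) = 0"
      using arg_cong[OF diff0, of "\<lambda>A. A $$ (i,j)"] Y Z by simp
    then show "Z $$ (i,j) = Y $$ (i,j)" using rho by simp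
  qed (use Y Z in auto)
  then show ?thesis unfolding Z_def by (rule Wt_fixed_point[OF Y])
qed

lemma block_saddle_point_exists:
  obtains x d1 d2 d3 where "x \<in> carrier_mat l n" "R1 (x * B) d1" "R2 x d2" "R3 x d3"
    "d1 * transpose_mat B + d2 + d3 = 0\<^sub>m l n"
proof -
  define c1 where "c1 = transpose_mat E * Yh * transpose_mat M"
  define c2 where "c2 = lambda \<cdot>\<^sub>m (transpose_mat RE * Ym)"
  have c: "c1 \<in> carrier_mat l n" "c2 \<in> carrier_mat l n"
    unfolding c1_def c2_def using E Yh M RE Ym by simp_all
  have Bt: "transpose_mat B \<in> carrier_mat n n" using B by simp
  have "c1 * transpose_mat B + c2 \<in> carrier_mat l n" using c Bt by simp
  from mat_linear_inj_imp_surj[OF saddle_operator_linear saddle_operator_inj this]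
  obtain Y where Y: "Y \<in> carrier_mat l n" and Y_eq: "saddle_operator Y = c1 * transpose_mat B + c2" .
  define x where "x = Y * Wt"
  have x: "x \<in> carrier_mat l n" "x * B \<in> carrier_mat l n" unfolding x_def using Y Wt B by simp_all
  have L: "L1 (x * B) \<in> carrier_mat l n" "L2 x \<in> carrier_mat l n"
    using mat_linearD(1)[OF L1_linear x(2)] mat_linearD(1)[OF L2_linear x(1)] .
  define d1 where "d1 = (1 / rho) \<cdot>\<^sub>m (c1 - L1 (x * B))"
  define d2 where "d2 = (1 / rho) \<cdot>\<^sub>m (c2 - L2 x)"
  define d3 where "d3 = x - Y"
  have d: "d1 \<in> carrier_mat l n" "d2 \<in> carrier_mat l n" "d3 \<in> carrier_mat l n"
    unfolding d1_def d2_def d3_def using L Y by (simp_all add: minus_carrier_mat)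
  have "L1 (x * B) + rho \<cdot>\<^sub>m d1 = c1"
    unfolding d1_def using L c rho by (intro eq_matI) simp_all
  then have R1: "R1 (x * B) d1" unfolding R1_def c1_def[symmetric] using x d by blast
  have "L2 x + rho \<cdot>\<^sub>m d2 = c2"
    unfolding d2_def using L c rho by (intro eq_matI) simp_all
  then have R2: "R2 x d2" unfolding R2_def c2_def[symmetric] using x d by blast
  have "x - d3 = Y" unfolding d3_def using x Y by (intro eq_matI) auto
  then have "x = (x - d3) * Wt" unfolding x_def by simp
  then have R3: "R3 x d3" unfolding R3_def using x d by blast
  have d1B: "d1 * transpose_mat B = (1 / rho) \<cdot>\<^sub>m (c1 * transpose_mat B - L1 (x * B) * transpose_mat B)"
    unfolding d1_def using c L Bt
    by (simp add: mult_smult_assoc_mat[of _ l n] minus_mult_distrib_mat[of _ l n] minus_carrier_mat)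
  have saddle_eq: "L1 (x * B) * transpose_mat B + L2 x + rho \<cdot>\<^sub>m (Y - x) = c1 * transpose_mat B + c2"
    using Y_eq unfolding saddle_operator_def x_def .
  have "d1 * transpose_mat B + d2 + d3 = 0\<^sub>m l n"
  proof (rule eq_matI)
    fix i j assume "i < dim_row (0\<^sub>m l n)" "j < dim_col (0\<^sub>m l n)"
    then have ij: "i < l" "j < n" by simp_all
    have "(L1 (x * B) * transpose_mat B) $$ (i,j) + L2 x $$ (i,j) + rho * (Y $$ (i,j) - x $$ (i,j))
        = (c1 * transpose_mat B) $$ (i,j) + c2 $$ (i,j)"
      using arg_cong[OF saddle_eq, of "\<lambda>A. A $$ (i,j)"] ij L c Bt Y x by simp
    then have key: "((c1 * transpose_mat B) $$ (i,j) - (L1 (x * B) * transpose_mat B) $$ (i,j))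
        + (c2 $$ (i,j) - L2 x $$ (i,j)) + rho * (x $$ (i,j) - Y $$ (i,j)) = 0"
      unfolding right_diff_distrib by linarith
    have "(1 / rho) * ((c1 * transpose_mat B) $$ (i,j) - (L1 (x * B) * transpose_mat B) $$ (i,j))
        + (1 / rho) * (c2 $$ (i,j) - L2 x $$ (i,j)) + (x $$ (i,j) - Y $$ (i,j))
      = (1 / rho) * (((c1 * transpose_mat B) $$ (i,j) - (L1 (x * B) * transpose_mat B) $$ (i,j))
        + (c2 $$ (i,j) - L2 x $$ (i,j)) + rho * (x $$ (i,j) - Y $$ (i,j)))"
      using rho by (simp add: field_simps)
    then have "(1 / rho) * ((c1 * transpose_mat B) $$ (i,j) - (L1 (x * B) * transpose_mat B) $$ (i,j))
        + (1 / rho) * (c2 $$ (i,j) - L2 x $$ (i,j)) + (x $$ (i,j) - Y $$ (i,j)) = 0"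
      unfolding key by simp
    then show "(d1 * transpose_mat B + d2 + d3) $$ (i,j) = 0\<^sub>m l n $$ (i,j)"
      unfolding d1B d2_def d3_def using ij L c Bt Y x by simp
  qed (use d Bt in simp_all)
  with R1 R2 R3 show ?thesis using that x(1) by blast
qed

end

context salsa_sharpening
begin

definition G :: "real mat" where
  "G = hstack n n [B, 1\<^sub>m n, 1\<^sub>m n]"

definition H :: "real mat" where
  "H = transpose_mat (hstack n n [0\<^sub>m n n, 1\<^sub>m n, 0\<^sub>m n n])"

definition R :: "real mat \<Rightarrow> real mat \<Rightarrow> bool" where
  "R v d \<longleftrightarrow> v \<in> carrier_mat l (3 * n) \<and> d \<in> carrier_mat l (3 * n) \<and>
     R1 (cblock n 0 v) (cblock n 0 d) \<and> R2 (cblock n 1 v) (cblock n 1 d) \<and> R3 (cblock n 2 v) (cblock n 2 d)"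

lemma R_carrier: "R v d \<Longrightarrow> v \<in> carrier_mat l (3 * n) \<and> d \<in> carrier_mat l (3 * n)"
  unfolding R_def by blast

lemma cblock_hstack3:
  assumes "A0 \<in> carrier_mat r n" "A1 \<in> carrier_mat r n" "A2 \<in> carrier_mat r n" "b < 3"
  shows "cblock n b (hstack r n [A0, A1, A2]) = [A0, A1, A2] ! b"
  using cblock_hstack[of b "[A0, A1, A2]" r n] assms by auto

lemma hstack3_carrier: "hstack r n [A0, A1, A2] \<in> carrier_mat r (3 * n)"
proof -
  have "length [A0, A1, A2] = 3" by simp
  then show ?thesis using hstack_carrier[of r n "[A0, A1, A2]"] by metis
qed

lemma G_carrier: "G \<in> carrier_mat n (3 * n)"
  unfolding G_def by (rule hstack3_carrier)

lemma cblock_G: "b < 3 \<Longrightarrow> cblock n b G = [B, 1\<^sub>m n, 1\<^sub>m n] ! b"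
  unfolding G_def using cblock_hstack3 B by simp

lemma H_carrier: "H \<in> carrier_mat (3 * n) n"
  unfolding H_def using hstack3_carrier by simp

lemma G_H: "G * H = 1\<^sub>m n"
proof -
  let ?K = "hstack n n [0\<^sub>m n n, 1\<^sub>m n, 0\<^sub>m n n]"
  have "G * H = msum n n (\<lambda>b. cblock n b G * transpose_mat (cblock n b ?K)) {..<3}"
    unfolding H_def by (rule mult_transpose_cblocks[OF G_carrier hstack3_carrier])
  also have "\<dots> = B * transpose_mat (0\<^sub>m n n) + 1\<^sub>m n * transpose_mat (1\<^sub>m n) + 1\<^sub>m n * transpose_mat (0\<^sub>m n n)"
    using B by (subst msum_lessThan_3) (simp_all add: cblock_G cblock_hstack3 numeral_2_eq_2)
  also have "\<dots> = 1\<^sub>m n" using B by (intro eq_matI) auto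
  finally show ?thesis .
qed

lemma R_monotone:
  assumes "R v d" "R v' d'"
  shows "frob_inner (v - v') (d - d') \<le> 0"
proof -
  have c: "v \<in> carrier_mat l (3 * n)" "d \<in> carrier_mat l (3 * n)" "v' \<in> carrier_mat l (3 * n)"
    "d' \<in> carrier_mat l (3 * n)" using assms unfolding R_def by auto
  have blocks: "cblock n b (v - v') = cblock n b v - cblock n b v'"
    "cblock n b (d - d') = cblock n b d - cblock n b d'" if "b < 3" for b
    using that c by (auto intro!: cblock_diff)
  have "frob_inner (v - v') (d - d') = (\<Sum>b<3. frob_inner (cblock n b (v - v')) (cblock n b (d - d')))"
    using c by (intro frob_inner_cblocks) (auto intro: minus_carrier_mat)
  also have "\<dots> = frob_inner (cblock n 0 v - cblock n 0 v') (cblock n 0 d - cblock n 0 d')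
      + frob_inner (cblock n 1 v - cblock n 1 v') (cblock n 1 d - cblock n 1 d')
      + frob_inner (cblock n 2 v - cblock n 2 v') (cblock n 2 d - cblock n 2 d')"
    by (simp add: numeral_3_eq_3 numeral_2_eq_2 blocks)
  also have "\<dots> \<le> 0"
    using R1_monotone R2_monotone R3_monotone assms unfolding R_def by (smt (verit))
  finally show ?thesis .
qed

lemma R_closed:
  assumes RS: "\<And>k. R (S k) (T k)" and lim: "mat_tendsto S v" "mat_tendsto T d"
    and c: "v \<in> carrier_mat l (3 * n)" "d \<in> carrier_mat l (3 * n)"
  shows "R v d"
proof -
  have Sc: "S k \<in> carrier_mat l (3 * n)" and Tc: "T k \<in> carrier_mat l (3 * n)" for k
    using RS[of k] unfolding R_def by auto
  have lim_blocks: "mat_tendsto (\<lambda>k. cblock n b (S k)) (cblock n b v)"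
    "mat_tendsto (\<lambda>k. cblock n b (T k)) (cblock n b d)" if "b < 3" for b
    using that by (auto intro!: mat_tendsto_cblock[OF lim(1) Sc c(1)] mat_tendsto_cblock[OF lim(2) Tc c(2)])
  have block_carrier: "cblock n b v \<in> carrier_mat l n" "cblock n b d \<in> carrier_mat l n" for b
    using c by (auto intro: cblock_carrier)
  have "R1 (cblock n 0 v) (cblock n 0 d)"
    by (rule R1_closed[OF _ lim_blocks block_carrier]) (use RS in \<open>auto simp: R_def\<close>)
  moreover have "R2 (cblock n 1 v) (cblock n 1 d)"
    by (rule R2_closed[OF _ lim_blocks block_carrier]) (use RS in \<open>auto simp: R_def\<close>)
  moreover have "R3 (cblock n 2 v) (cblock n 2 d)"
    by (rule R3_closed[OF _ lim_blocks block_carrier]) (use RS in \<open>auto simp: R_def\<close>)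
  ultimately show ?thesis unfolding R_def using c by blast
qed

lemma saddle_point_exists: "\<exists>x d. x \<in> carrier_mat l n \<and> R (x * G) d \<and> d * transpose_mat G = 0\<^sub>m l n"
proof -
  obtain x d1 d2 d3 where x: "x \<in> carrier_mat l n" and R123: "R1 (x * B) d1" "R2 x d2" "R3 x d3"
    and dual: "d1 * transpose_mat B + d2 + d3 = 0\<^sub>m l n"
    by (rule block_saddle_point_exists)
  have dc: "d1 \<in> carrier_mat l n" "d2 \<in> carrier_mat l n" "d3 \<in> carrier_mat l n"
    using R123 unfolding R1_def R2_def R3_def by blast+
  define d where "d = hstack l n [d1, d2, d3]"
  have d: "d \<in> carrier_mat l (3 * n)" unfolding d_def by (rule hstack3_carrier)
  have xG: "x * G \<in> carrier_mat l (3 * n)" using x G_carrier by simp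
  have xG_blocks: "cblock n b (x * G) = x * cblock n b G" if "b < 3" for b
    using that by (intro cblock_mult[OF x G_carrier]) auto
  have "R (x * G) d"
    unfolding R_def d_def using xG hstack3_carrier R123 x
    by (simp add: xG_blocks cblock_G cblock_hstack3[OF dc] numeral_2_eq_2)
  moreover have "d * transpose_mat G = d1 * transpose_mat B + d2 + d3"
  proof -
    have "d * transpose_mat G = msum l n (\<lambda>b. cblock n b d * transpose_mat (cblock n b G)) {..<3}"
      by (rule mult_transpose_cblocks[OF d G_carrier])
    also have "\<dots> = d1 * transpose_mat B + d2 * transpose_mat (1\<^sub>m n) + d3 * transpose_mat (1\<^sub>m n)"
      unfolding d_def using dc B
      by (subst msum_lessThan_3) (simp_all add: cblock_G cblock_hstack3 numeral_2_eq_2)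
    finally show ?thesis using dc by simp
  qed
  ultimately show ?thesis using x dual by auto
qed

end

context salsa_sharpening
begin

theorem salsa_convergent:
  fixes X V1 V2 V3 D1 D2 D3 :: "nat \<Rightarrow> real mat"
  assumes init: "V1 0 \<in> carrier_mat l n" "V2 0 \<in> carrier_mat l n" "V3 0 \<in> carrier_mat l n"
      "D1 0 \<in> carrier_mat l n" "D2 0 \<in> carrier_mat l n" "D3 0 \<in> carrier_mat l n"
    and X_carrier: "\<And>k. X (Suc k) \<in> carrier_mat l n"
    and X_step: "\<And>k. (X (Suc k) * B - V1 k - D1 k) * transpose_mat B + (X (Suc k) - V2 k - D2 k)
      + (X (Suc k) - V3 k - D3 k) = 0\<^sub>m l n"
    and V1_step: "\<And>k. R1 (V1 (Suc k)) (D1 (Suc k))"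
    and V2_step: "\<And>k. R2 (V2 (Suc k)) (D2 (Suc k))"
    and V3_step: "\<And>k. R3 (V3 (Suc k)) (D3 (Suc k))"
    and D1_step: "\<And>k. D1 (Suc k) = D1 k - (X (Suc k) * B - V1 (Suc k))"
    and D2_step: "\<And>k. D2 (Suc k) = D2 k - (X (Suc k) - V2 (Suc k))"
    and D3_step: "\<And>k. D3 (Suc k) = D3 k - (X (Suc k) - V3 (Suc k))"
  shows "\<exists>L \<in> carrier_mat l n. mat_tendsto X L"
proof -
  have c: "V1 k \<in> carrier_mat l n" "V2 k \<in> carrier_mat l n" "V3 k \<in> carrier_mat l n"
    "D1 k \<in> carrier_mat l n" "D2 k \<in> carrier_mat l n" "D3 k \<in> carrier_mat l n" for k
    using init R1_carrier[OF V1_step] R2_carrier[OF V2_step] R3_carrier[OF V3_step] by (cases k; simp)+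
  have [simp]: "dim_col (D2 k) = n" "dim_col (D3 k) = n" for k using c(5,6)[of k] by auto
  define V where "V k = hstack l n [V1 k, V2 k, V3 k]" for k
  define D where "D k = hstack l n [D1 k, D2 k, D3 k]" for k
  have VD: "V k \<in> carrier_mat l (3 * n)" "D k \<in> carrier_mat l (3 * n)" for k
    unfolding V_def D_def by (rule hstack3_carrier)+
  have VD_blocks: "cblock n b (V k) = [V1 k, V2 k, V3 k] ! b" "cblock n b (D k) = [D1 k, D2 k, D3 k] ! b"
    if "b < 3" for b k
    unfolding V_def D_def by (rule cblock_hstack3[OF c(1-3) that], rule cblock_hstack3[OF c(4-6) that])
  have XG: "X (Suc k) * G \<in> carrier_mat l (3 * n)" for k using X_carrier G_carrier by (rule mult_carrier_mat)
  have XG_blocks: "cblock n b (X (Suc k) * G) = X (Suc k) * [B, 1\<^sub>m n, 1\<^sub>m n] ! b" if "b < 3" for b k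
    using cblock_mult[OF X_carrier G_carrier, of b k] cblock_G[OF that] that by simp
  interpret admm: scaled_admm l n "3 * n" G H R X V D
  proof
    fix k
    show "(X (Suc k) * G - V k - D k) * transpose_mat G = 0\<^sub>m l n"
    proof -
      have blocks: "cblock n b (X (Suc k) * G - V k - D k)
          = X (Suc k) * [B, 1\<^sub>m n, 1\<^sub>m n] ! b - [V1 k, V2 k, V3 k] ! b - [D1 k, D2 k, D3 k] ! b"
        if "b < 3" for b
        using that XG VD by (simp add: cblock_diff[where m=3 and r=l] minus_carrier_mat XG_blocks VD_blocks)
      have "(X (Suc k) * G - V k - D k) * transpose_mat G
          = msum l n (\<lambda>b. cblock n b (X (Suc k) * G - V k - D k) * transpose_mat (cblock n b G)) {..<3}"
        by (rule mult_transpose_cblocks[OF _ G_carrier]) (use XG VD in \<open>simp add: minus_carrier_mat\<close>)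
      also have "\<dots> = (X (Suc k) * B - V1 k - D1 k) * transpose_mat B
          + (X (Suc k) * 1\<^sub>m n - V2 k - D2 k) * transpose_mat (1\<^sub>m n)
          + (X (Suc k) * 1\<^sub>m n - V3 k - D3 k) * transpose_mat (1\<^sub>m n)"
      proof -
        have "transpose_mat B \<in> carrier_mat n n" using B by simp
        then show ?thesis
          using X_carrier[of k] B mult_carrier_mat[OF minus_carrier_mat[OF c(4)]]
            mult_carrier_mat[OF minus_carrier_mat[OF c(5)] one_carrier_mat]
            mult_carrier_mat[OF minus_carrier_mat[OF c(6)] one_carrier_mat]
          by (subst msum_lessThan_3) (simp_all add: blocks cblock_G numeral_2_eq_2)
      qed
      also have "\<dots> = 0\<^sub>m l n" using X_step[of k] X_carrier[of k] c by simp
      finally show ?thesis .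
    qed
    show "R (V (Suc k)) (D (Suc k))"
      unfolding R_def using VD V1_step V2_step V3_step by (simp add: VD_blocks numeral_2_eq_2)
    show "D (Suc k) = D k - (X (Suc k) * G - V (Suc k))"
    proof (rule mat_eq_if_cblocks_eq[OF VD(2)])
      show "D k - (X (Suc k) * G - V (Suc k)) \<in> carrier_mat l (3 * n)"
        using XG VD by (simp add: minus_carrier_mat)
      fix b :: nat assume b: "b < 3"
      have "cblock n b (D k - (X (Suc k) * G - V (Suc k)))
          = [D1 k, D2 k, D3 k] ! b - (X (Suc k) * [B, 1\<^sub>m n, 1\<^sub>m n] ! b - [V1 (Suc k), V2 (Suc k), V3 (Suc k)] ! b)"
        using b XG VD by (simp add: cblock_diff[where m=3 and r=l] minus_carrier_mat XG_blocks VD_blocks)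
      also have "\<dots> = [D1 (Suc k), D2 (Suc k), D3 (Suc k)] ! b"
      proof -
        have X1: "X (Suc k) * 1\<^sub>m n = X (Suc k)" using X_carrier[of k] by simp
        consider "b = 0" | "b = 1" | "b = 2" using b by linarith
        then show ?thesis by cases (simp_all add: D1_step D2_step D3_step X1)
      qed
      finally show "cblock n b (D (Suc k)) = cblock n b (D k - (X (Suc k) * G - V (Suc k)))"
        using b by (simp add: VD_blocks)
    qed
  qed (fact G_carrier H_carrier G_H R_carrier R_monotone R_closed saddle_point_exists VD X_carrier)+
  show ?thesis by (rule admm.X_convergent)
qed

end

lemma one_smult_mat [simp]: "1 \<cdot>\<^sub>m (A :: real mat) = A"
  by (intro eq_matI) auto

lemma frob_inner_add_smult_self:
  assumes "A \<in> carrier_mat r c" "C \<in> carrier_mat r c"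
  shows "frob_inner (A + t \<cdot>\<^sub>m C) (A + t \<cdot>\<^sub>m C) = frob_inner A A + 2 * t * frob_inner A C + t\<^sup>2 * frob_inner C C"
  using assms unfolding frob_inner_def
  by (auto simp: algebra_simps power2_eq_square sum.distrib sum_distrib_left intro!: sum.cong)

lemma linear_coeff_zero_if_quadratic_minimal:
  fixes a b :: real
  assumes min: "\<And>t. 0 \<le> 2 * t * a + t\<^sup>2 * b" and b: "0 \<le> b"
  shows "a = 0"
proof (rule ccontr)
  assume "a \<noteq> 0"
  define t where "t = - a / (b + 1)"
  have "2 * t * a + t\<^sup>2 * b = t * (2 * a + t * b)" by (simp add: power2_eq_square algebra_simps)
  also have "2 * a + t * b = a * (b + 2) / (b + 1)" unfolding t_def using b by (simp add: field_simps)
  also have "t * (a * (b + 2) / (b + 1)) = - (a * a) * (b + 2) / ((b + 1) * (b + 1))"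
    unfolding t_def by simp
  also have "\<dots> < 0"
    using \<open>a \<noteq> 0\<close> b by (intro divide_neg_pos mult_neg_pos) (auto simp: zero_less_mult_iff)
  finally show False using min[of t] by simp
qed

lemma X_step_normal_equation:
  fixes X B P1 P2 P3 Q1 Q2 Q3 :: "real mat"
  assumes X: "X \<in> carrier_mat l n" and B: "B \<in> carrier_mat n n"
    and c: "P1 \<in> carrier_mat l n" "P2 \<in> carrier_mat l n" "P3 \<in> carrier_mat l n"
      "Q1 \<in> carrier_mat l n" "Q2 \<in> carrier_mat l n" "Q3 \<in> carrier_mat l n"
    and min: "\<forall>Z \<in> carrier_mat l n.
      (frob_norm (X * B - P1 - Q1))\<^sup>2 + (frob_norm (X - P2 - Q2))\<^sup>2 + (frob_norm (X - P3 - Q3))\<^sup>2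
      \<le> (frob_norm (Z * B - P1 - Q1))\<^sup>2 + (frob_norm (Z - P2 - Q2))\<^sup>2 + (frob_norm (Z - P3 - Q3))\<^sup>2"
  shows "(X * B - P1 - Q1) * transpose_mat B + (X - P2 - Q2) + (X - P3 - Q3) = 0\<^sub>m l n"
proof (rule frob_inner_orthogonal_all_imp_zero)
  define A1 where "A1 = X * B - P1 - Q1"
  define A2 where "A2 = X - P2 - Q2"
  define A3 where "A3 = X - P3 - Q3"
  have A: "A1 \<in> carrier_mat l n" "A2 \<in> carrier_mat l n" "A3 \<in> carrier_mat l n"
    unfolding A1_def A2_def A3_def using c by (simp_all add: minus_carrier_mat)
  show "A1 * transpose_mat B + A2 + A3 \<in> carrier_mat l n" using A B by simp
  fix Z :: "real mat" assume Z: "Z \<in> carrier_mat l n"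
  have ZB: "Z * B \<in> carrier_mat l n" using Z B by simp
  have "0 \<le> 2 * t * (frob_inner A1 (Z * B) + frob_inner A2 Z + frob_inner A3 Z)
      + t\<^sup>2 * (frob_inner (Z * B) (Z * B) + frob_inner Z Z + frob_inner Z Z)" for t
  proof -
    have "(X + t \<cdot>\<^sub>m Z) * B - P1 - Q1 = A1 + t \<cdot>\<^sub>m (Z * B)"
      unfolding A1_def using X Z B c
      by (intro eq_matI) (auto simp: scalar_prod_def sum.distrib algebra_simps sum_distrib_left)
    moreover have "(X + t \<cdot>\<^sub>m Z) - P2 - Q2 = A2 + t \<cdot>\<^sub>m Z" "(X + t \<cdot>\<^sub>m Z) - P3 - Q3 = A3 + t \<cdot>\<^sub>m Z"
      unfolding A2_def A3_def using X Z c by (auto intro!: eq_matI)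
    moreover have "X + t \<cdot>\<^sub>m Z \<in> carrier_mat l n" using Z by simp
    ultimately show ?thesis
      using min[rule_format, of "X + t \<cdot>\<^sub>m Z"] frob_inner_add_smult_self[OF A(1) ZB, of t]
        frob_inner_add_smult_self[OF A(2) Z, of t] frob_inner_add_smult_self[OF A(3) Z, of t]
      unfolding frob_norm_sq A1_def[symmetric] A2_def[symmetric] A3_def[symmetric]
      by (simp add: algebra_simps)
  qed
  then have "frob_inner A1 (Z * B) + frob_inner A2 Z + frob_inner A3 Z = 0"
    by (rule linear_coeff_zero_if_quadratic_minimal) (auto intro!: add_nonneg_nonneg frob_inner_self_nonneg)
  moreover have "frob_inner (A1 * transpose_mat B + A2 + A3) Z = frob_inner A1 (Z * B) + frob_inner A2 Z + frob_inner A3 Z"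
    using A B Z by (simp add: frob_inner_add_left[of _ l n] frob_inner_mult_right[of _ n n _ l])
  ultimately show "frob_inner (A1 * transpose_mat B + A2 + A3) Z = 0" by simp
qed

lemma prox_step_normal_equation:
  fixes P Q V A D Y :: "real mat"
  assumes P: "P \<in> carrier_mat r' r" and Q: "Q \<in> carrier_mat c c'" and Y: "Y \<in> carrier_mat r' c'"
    and c: "V \<in> carrier_mat r c" "A \<in> carrier_mat r c" "D \<in> carrier_mat r c"
    and w: "0 \<le> w" and rho: "0 \<le> rho"
    and min: "\<forall>Z \<in> carrier_mat r c.
      w * (frob_norm (P * V * Q - Y))\<^sup>2 + rho * (frob_norm (A - V - D))\<^sup>2
      \<le> w * (frob_norm (P * Z * Q - Y))\<^sup>2 + rho * (frob_norm (A - Z - D))\<^sup>2"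
  shows "w \<cdot>\<^sub>m (transpose_mat P * (P * V * Q - Y) * transpose_mat Q) = rho \<cdot>\<^sub>m (A - V - D)"
proof -
  define A1 where "A1 = P * V * Q - Y"
  define A2 where "A2 = A - V - D"
  have A12: "A1 \<in> carrier_mat r' c'" "A2 \<in> carrier_mat r c"
    unfolding A1_def A2_def using P Q Y c by (simp_all add: minus_carrier_mat)
  have grad: "transpose_mat P * A1 * transpose_mat Q \<in> carrier_mat r c" using P Q A12 by simp
  have "w \<cdot>\<^sub>m (transpose_mat P * A1 * transpose_mat Q) - rho \<cdot>\<^sub>m A2 = 0\<^sub>m r c"
  proof (rule frob_inner_orthogonal_all_imp_zero)
    show "w \<cdot>\<^sub>m (transpose_mat P * A1 * transpose_mat Q) - rho \<cdot>\<^sub>m A2 \<in> carrier_mat r c"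
      using A12 by (simp add: minus_carrier_mat)
    fix Z :: "real mat" assume Z: "Z \<in> carrier_mat r c"
    have PZQ: "P * Z * Q \<in> carrier_mat r' c'" and mZ: "(-1) \<cdot>\<^sub>m Z \<in> carrier_mat r c" using P Z Q by simp_all
    have "0 \<le> 2 * t * (w * frob_inner A1 (P * Z * Q) + rho * frob_inner A2 ((-1) \<cdot>\<^sub>m Z))
        + t\<^sup>2 * (w * frob_inner (P * Z * Q) (P * Z * Q) + rho * frob_inner Z Z)" for t
    proof -
      have "P * (V + t \<cdot>\<^sub>m Z) * Q = P * V * Q + t \<cdot>\<^sub>m (P * Z * Q)"
        using P c Z Q
        by (simp add: mult_add_distrib_mat[of _ r' r] mult_smult_distrib[of _ r' r]
            add_mult_distrib_mat[of _ r' c] mult_smult_assoc_mat[of _ r' c])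
      then have "P * (V + t \<cdot>\<^sub>m Z) * Q - Y = A1 + t \<cdot>\<^sub>m (P * Z * Q)"
        unfolding A1_def using P c Z Q Y by (intro eq_matI) auto
      moreover have "A - (V + t \<cdot>\<^sub>m Z) - D = A2 + t \<cdot>\<^sub>m ((-1) \<cdot>\<^sub>m Z)"
        unfolding A2_def using c Z by (intro eq_matI) auto
      moreover have "frob_inner ((-1) \<cdot>\<^sub>m Z) ((-1) \<cdot>\<^sub>m Z) = frob_inner Z Z"
        using Z by (simp add: frob_inner_smult_left[of _ r c] frob_inner_smult_right[of _ r c])
      moreover have "V + t \<cdot>\<^sub>m Z \<in> carrier_mat r c" using Z by simp
      ultimately show ?thesis
        using min[rule_format, of "V + t \<cdot>\<^sub>m Z"] frob_inner_add_smult_self[OF A12(1) PZQ, of t]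
          frob_inner_add_smult_self[OF A12(2) mZ, of t]
        unfolding frob_norm_sq A1_def[symmetric] A2_def[symmetric] by (simp add: algebra_simps)
    qed
    then have "w * frob_inner A1 (P * Z * Q) + rho * frob_inner A2 ((-1) \<cdot>\<^sub>m Z) = 0"
      by (rule linear_coeff_zero_if_quadratic_minimal)
        (use w rho in \<open>auto intro!: add_nonneg_nonneg mult_nonneg_nonneg frob_inner_self_nonneg\<close>)
    moreover have "frob_inner A1 (P * Z * Q) = frob_inner (transpose_mat P * A1 * transpose_mat Q) Z"
    proof -
      have "frob_inner (P * Z * Q) A1 = frob_inner (P * Z) (A1 * transpose_mat Q)"
        by (rule frob_inner_mult_right[OF Q _ A12(1)]) (use P Z in simp)
      also have "\<dots> = frob_inner Z (transpose_mat P * (A1 * transpose_mat Q))"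
        by (rule frob_inner_mult_left[OF P Z]) (use A12 Q in simp)
      also have "\<dots> = frob_inner (transpose_mat P * A1 * transpose_mat Q) Z"
        using P Q A12 Z grad by (simp add: frob_inner_commute[of Z r c])
      finally show ?thesis using frob_inner_commute[OF PZQ A12(1)] by simp
    qed
    moreover have "frob_inner A2 ((-1) \<cdot>\<^sub>m Z) = - frob_inner A2 Z"
      using A12 Z by (simp add: frob_inner_smult_right[of _ r c])
    ultimately show "frob_inner (w \<cdot>\<^sub>m (transpose_mat P * A1 * transpose_mat Q) - rho \<cdot>\<^sub>m A2) Z = 0"
      using A12 Z grad by (simp add: frob_inner_diff_left[of _ r c] frob_inner_smult_left[of _ r c])
  qed
  then show ?thesis
    unfolding A1_def[symmetric] A2_def[symmetric]
    by (rule mat_eq_if_diff_eq_0[rotated 2]) (use grad A12 in simp_all)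
qed

lemma prox_step_normal_equation_left:
  fixes P V A D Y :: "real mat"
  assumes P: "P \<in> carrier_mat r' r" and Y: "Y \<in> carrier_mat r' c"
    and c: "V \<in> carrier_mat r c" "A \<in> carrier_mat r c" "D \<in> carrier_mat r c"
    and w: "0 \<le> w" and rho: "0 \<le> rho"
    and min: "\<forall>Z \<in> carrier_mat r c.
      w * (frob_norm (P * V - Y))\<^sup>2 + rho * (frob_norm (A - V - D))\<^sup>2
      \<le> w * (frob_norm (P * Z - Y))\<^sup>2 + rho * (frob_norm (A - Z - D))\<^sup>2"
  shows "w \<cdot>\<^sub>m (transpose_mat P * (P * V - Y)) = rho \<cdot>\<^sub>m (A - V - D)"
proof -
  have one: "P * Z * 1\<^sub>m c = P * Z" if "Z \<in> carrier_mat r c" for Z using P that by simp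
  have "w \<cdot>\<^sub>m (transpose_mat P * (P * V * 1\<^sub>m c - Y) * transpose_mat (1\<^sub>m c)) = rho \<cdot>\<^sub>m (A - V - D)"
  proof (rule prox_step_normal_equation[OF P one_carrier_mat Y c w rho], intro ballI)
    fix Z :: "real mat" assume Z: "Z \<in> carrier_mat r c"
    show "w * (frob_norm (P * V * 1\<^sub>m c - Y))\<^sup>2 + rho * (frob_norm (A - V - D))\<^sup>2
      \<le> w * (frob_norm (P * Z * 1\<^sub>m c - Y))\<^sup>2 + rho * (frob_norm (A - Z - D))\<^sup>2"
      unfolding one[OF Z] one[OF c(1)] using min Z by blast
  qed
  moreover have "transpose_mat P * (P * V - Y) * 1\<^sub>m c = transpose_mat P * (P * V - Y)"
    using P Y by (simp add: minus_carrier_mat)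
  ultimately show ?thesis unfolding one[OF c(1)] transpose_one by simp
qed

context salsa_sharpening
begin

lemma R1_if_normal_equation:
  assumes V: "V \<in> carrier_mat l n" and D: "D \<in> carrier_mat l n" and XB: "XB \<in> carrier_mat l n"
    and eq: "transpose_mat E * (E * V * M - Yh) * transpose_mat M = rho \<cdot>\<^sub>m (XB - V - D)"
  shows "R1 V (D - (XB - V))"
proof -
  have EVM: "E * V * M \<in> carrier_mat Lh nh" using E V M by simp
  have "transpose_mat E * (E * V * M - Yh) * transpose_mat M
      = L1 V - transpose_mat E * Yh * transpose_mat M"
    unfolding L1_def using E M Yh EVM
    by (simp add: mult_minus_distrib_mat[of _ l Lh] minus_mult_distrib_mat[of _ l nh])
  then have "L1 V = transpose_mat E * Yh * transpose_mat M + rho \<cdot>\<^sub>m (XB - V - D)"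
    using eq mat_linearD(1)[OF L1_linear V] E M Yh by (auto intro!: eq_matI dest!: arg_cong[of _ _ "\<lambda>A. A $$ _"])
  then show ?thesis
    unfolding R1_def using V D XB E M Yh by (auto simp: minus_carrier_mat right_diff_distrib intro!: eq_matI)
qed

lemma R2_if_normal_equation:
  assumes V: "V \<in> carrier_mat l n" and D: "D \<in> carrier_mat l n" and X: "X \<in> carrier_mat l n"
    and eq: "lambda \<cdot>\<^sub>m (transpose_mat RE * (RE * V - Ym)) = rho \<cdot>\<^sub>m (X - V - D)"
  shows "R2 V (D - (X - V))"
proof -
  have "transpose_mat RE * (RE * V - Ym) = transpose_mat RE * (RE * V) - transpose_mat RE * Ym"
    by (rule mult_minus_distrib_mat) (use RE V Ym in simp_all)
  then have "lambda \<cdot>\<^sub>m (transpose_mat RE * (RE * V - Ym)) = L2 V - lambda \<cdot>\<^sub>m (transpose_mat RE * Ym)"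
    unfolding L2_def using RE V Ym by (auto simp: right_diff_distrib intro!: eq_matI)
  then have "L2 V = lambda \<cdot>\<^sub>m (transpose_mat RE * Ym) + rho \<cdot>\<^sub>m (X - V - D)"
    using eq mat_linearD(1)[OF L2_linear V] RE Ym by (auto intro!: eq_matI dest!: arg_cong[of _ _ "\<lambda>A. A $$ _"])
  then show ?thesis
    unfolding R2_def using V D X RE Ym by (auto simp: minus_carrier_mat right_diff_distrib intro!: eq_matI)
qed

lemma R3_if_denoised:
  assumes A: "A \<in> carrier_mat l n" and D: "D \<in> carrier_mat l n" and V: "V = (A - D) * Wt"
  shows "R3 V (D - (A - V))"
proof -
  have Vc: "V \<in> carrier_mat l n" unfolding V by (rule mult_carrier_mat[OF minus_carrier_mat[OF D] Wt])
  have "V - (D - (A - V)) = A - D" using A D Vc by (intro eq_matI) auto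
  then show ?thesis unfolding R3_def using Vc D A by (simp add: minus_carrier_mat flip: V)
qed

theorem salsa_iterates_convergent:
  fixes X V1 V2 V3 D1 D2 D3 :: "nat \<Rightarrow> real mat"
  assumes init: "V1 0 = 0\<^sub>m l n" "V2 0 = 0\<^sub>m l n" "V3 0 = 0\<^sub>m l n"
      "D1 0 = 0\<^sub>m l n" "D2 0 = 0\<^sub>m l n" "D3 0 = 0\<^sub>m l n"
    and X_step: "\<forall>k. X (Suc k) \<in> carrier_mat l n \<and>
        (\<forall>Z \<in> carrier_mat l n.
            (frob_norm (X (Suc k) * B - V1 k - D1 k))\<^sup>2 + (frob_norm (X (Suc k) - V2 k - D2 k))\<^sup>2
              + (frob_norm (X (Suc k) - V3 k - D3 k))\<^sup>2
          \<le> (frob_norm (Z * B - V1 k - D1 k))\<^sup>2 + (frob_norm (Z - V2 k - D2 k))\<^sup>2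
              + (frob_norm (Z - V3 k - D3 k))\<^sup>2)"
    and V1_step: "\<forall>k. V1 (Suc k) \<in> carrier_mat l n \<and>
        (\<forall>Z \<in> carrier_mat l n.
            (frob_norm (E * V1 (Suc k) * M - Yh))\<^sup>2 + rho * (frob_norm (X (Suc k) * B - V1 (Suc k) - D1 k))\<^sup>2
          \<le> (frob_norm (E * Z * M - Yh))\<^sup>2 + rho * (frob_norm (X (Suc k) * B - Z - D1 k))\<^sup>2)"
    and V2_step: "\<forall>k. V2 (Suc k) \<in> carrier_mat l n \<and>
        (\<forall>Z \<in> carrier_mat l n.
            lambda * (frob_norm (RE * V2 (Suc k) - Ym))\<^sup>2 + rho * (frob_norm (X (Suc k) - V2 (Suc k) - D2 k))\<^sup>2
          \<le> lambda * (frob_norm (RE * Z - Ym))\<^sup>2 + rho * (frob_norm (X (Suc k) - Z - D2 k))\<^sup>2)"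
    and V3_step: "\<And>k. V3 (Suc k) = transpose_mat (transpose_mat Wt * transpose_mat (X (Suc k) - D3 k))"
    and D1_step: "\<And>k. D1 (Suc k) = D1 k - (X (Suc k) * B - V1 (Suc k))"
    and D2_step: "\<And>k. D2 (Suc k) = D2 k - (X (Suc k) - V2 (Suc k))"
    and D3_step: "\<And>k. D3 (Suc k) = D3 k - (X (Suc k) - V3 (Suc k))"
  shows "\<exists>L \<in> carrier_mat l n. mat_tendsto X L"
proof -
  have X: "X (Suc k) \<in> carrier_mat l n" for k using X_step by blast
  have XB: "X (Suc k) * B \<in> carrier_mat l n" for k using X B by (rule mult_carrier_mat)
  have V12: "V1 (Suc k) \<in> carrier_mat l n" "V2 (Suc k) \<in> carrier_mat l n" for k
    using V1_step V2_step by blast+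
  have D12: "D1 k \<in> carrier_mat l n" "D2 k \<in> carrier_mat l n" for k
    by (cases k, simp add: init, simp add: D1_step minus_carrier_mat[OF minus_carrier_mat[OF V12(1)]])
      (cases k, simp add: init, simp add: D2_step minus_carrier_mat[OF minus_carrier_mat[OF V12(2)]])
  have V3_eq: "V3 (Suc k) = (X (Suc k) - D3 k) * Wt" if "D3 k \<in> carrier_mat l n" for k
    unfolding V3_step using transpose_mult[of "transpose_mat Wt" n n "transpose_mat (X (Suc k) - D3 k)" l]
      that Wt by (simp add: minus_carrier_mat)
  have D3: "D3 k \<in> carrier_mat l n" for k
  proof (induction k)
    case (Suc k)
    show ?case unfolding D3_step V3_eq[OF Suc]
      by (rule minus_carrier_mat[OF minus_carrier_mat[OF mult_carrier_mat[OF minus_carrier_mat[OF Suc] Wt]]])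
  qed (simp add: init)
  have V12_all: "V1 k \<in> carrier_mat l n" "V2 k \<in> carrier_mat l n" for k
    using init V12 by (cases k; simp)+
  have V3: "V3 k \<in> carrier_mat l n" for k
    using init V3_eq[OF D3] Wt by (cases k) (simp_all add: mult_carrier_mat[OF minus_carrier_mat[OF D3] Wt])
  have V1_R: "R1 (V1 (Suc k)) (D1 (Suc k))" for k
  proof -
    have "1 \<cdot>\<^sub>m (transpose_mat E * (E * V1 (Suc k) * M - Yh) * transpose_mat M)
        = rho \<cdot>\<^sub>m (X (Suc k) * B - V1 (Suc k) - D1 k)"
      by (rule prox_step_normal_equation[OF E M Yh V12(1) XB D12(1)]) (use V1_step rho in auto)
    then show ?thesis unfolding D1_step by (intro R1_if_normal_equation[OF V12(1) D12(1) XB]) simp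
  qed
  have V2_R: "R2 (V2 (Suc k)) (D2 (Suc k))" for k
  proof -
    have "lambda \<cdot>\<^sub>m (transpose_mat RE * (RE * V2 (Suc k) - Ym)) = rho \<cdot>\<^sub>m (X (Suc k) - V2 (Suc k) - D2 k)"
      by (rule prox_step_normal_equation_left[OF RE Ym V12(2) X D12(2)]) (use V2_step rho lambda in auto)
    then show ?thesis unfolding D2_step by (rule R2_if_normal_equation[OF V12(2) D12(2) X])
  qed
  show ?thesis
  proof (rule salsa_convergent[of V1 V2 V3 D1 D2 D3 X, OF _ _ _ _ _ _ X])
    fix k
    show "(X (Suc k) * B - V1 k - D1 k) * transpose_mat B + (X (Suc k) - V2 k - D2 k)
        + (X (Suc k) - V3 k - D3 k) = 0\<^sub>m l n"
      by (rule X_step_normal_equation[OF X B V12_all V3 D12 D3]) (use X_step in blast)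
    show "R3 (V3 (Suc k)) (D3 (Suc k))" unfolding D3_step by (rule R3_if_denoised[OF X D3 V3_eq[OF D3]])
  qed (use init V1_R V2_R D1_step D2_step D3_step in auto)
qed

end

theorem corollary3:
  fixes Lh Lm Ls h w p nh K :: nat
    and Yh Ym B M R E W :: "real mat"
    and rho lambda tau :: real
    and C :: "nat \<Rightarrow> real mat" and beta :: "nat \<Rightarrow> nat \<Rightarrow> real"
    and X V1 V2 V3 D1 D2 D3 :: "nat \<Rightarrow> real mat"
  assumes dims: "0 < Lh" "0 < Lm" "0 < Ls" "0 < h" "0 < w" "0 < nh" "0 < p"
    and Yh: "Yh \<in> carrier_mat Lh nh"
    and Ym: "Ym \<in> carrier_mat Lm (h*w)"
    and B: "B \<in> carrier_mat (h*w) (h*w)"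
    and B_cyclic: "\<exists>b. \<forall>r c r' c'. r < h \<longrightarrow> c < w \<longrightarrow> r' < h \<longrightarrow> c' < w \<longrightarrow>
                     B $$ (pix w r c, pix w r' c') = b ((r' + h - r) mod h) ((c' + w - c) mod w)"
    and M_subsampling: "\<exists>s. inj_on s {..<nh} \<and> (\<forall>q<nh. s q < h*w) \<and>
                     M = mat (h*w) nh (\<lambda>(j,q). if j = s q then 1 else 0)"
    and R: "R \<in> carrier_mat Lm Lh"
    and E: "E \<in> carrier_mat Lh Ls"
    and pos: "0 < rho" "0 < lambda" "0 < tau"
    and C_psd: "\<forall>j<K. psd_mat (p*p) (C j)"
    and beta_nonneg: "\<forall>i<h*w. \<forall>j<K. 0 \<le> beta j i"
    and beta_sum: "\<forall>i<h*w. (\<Sum>j<K. beta j i) = 1"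
    and W_def: "W = gmm_W h w p K C beta (tau / rho)"
    and init: "V1 0 = 0\<^sub>m Ls (h*w)" "V2 0 = 0\<^sub>m Ls (h*w)" "V3 0 = 0\<^sub>m Ls (h*w)"
              "D1 0 = 0\<^sub>m Ls (h*w)" "D2 0 = 0\<^sub>m Ls (h*w)" "D3 0 = 0\<^sub>m Ls (h*w)"
    and X_step: "\<forall>k. X (Suc k) \<in> carrier_mat Ls (h*w) \<and>
        (\<forall>Z \<in> carrier_mat Ls (h*w).
            (frob_norm (X (Suc k) * B - V1 k - D1 k))\<^sup>2 + (frob_norm (X (Suc k) - V2 k - D2 k))\<^sup>2
              + (frob_norm (X (Suc k) - V3 k - D3 k))\<^sup>2
          \<le> (frob_norm (Z * B - V1 k - D1 k))\<^sup>2 + (frob_norm (Z - V2 k - D2 k))\<^sup>2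
              + (frob_norm (Z - V3 k - D3 k))\<^sup>2)"
    and V1_step: "\<forall>k. V1 (Suc k) \<in> carrier_mat Ls (h*w) \<and>
        (\<forall>Z \<in> carrier_mat Ls (h*w).
            (frob_norm (E * V1 (Suc k) * M - Yh))\<^sup>2 + rho * (frob_norm (X (Suc k) * B - V1 (Suc k) - D1 k))\<^sup>2
          \<le> (frob_norm (E * Z * M - Yh))\<^sup>2 + rho * (frob_norm (X (Suc k) * B - Z - D1 k))\<^sup>2)"
    and V2_step: "\<forall>k. V2 (Suc k) \<in> carrier_mat Ls (h*w) \<and>
        (\<forall>Z \<in> carrier_mat Ls (h*w).
            lambda * (frob_norm (R * E * V2 (Suc k) - Ym))\<^sup>2 + rho * (frob_norm (X (Suc k) - V2 (Suc k) - D2 k))\<^sup>2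
          \<le> lambda * (frob_norm (R * E * Z - Ym))\<^sup>2 + rho * (frob_norm (X (Suc k) - Z - D2 k))\<^sup>2)"
    and V3_step: "\<forall>k. V3 (Suc k) = transpose_mat (W * transpose_mat (X (Suc k) - D3 k))"
    and D1_step: "\<forall>k. D1 (Suc k) = D1 k - (X (Suc k) * B - V1 (Suc k))"
    and D2_step: "\<forall>k. D2 (Suc k) = D2 k - (X (Suc k) - V2 (Suc k))"
    and D3_step: "\<forall>k. D3 (Suc k) = D3 k - (X (Suc k) - V3 (Suc k))"
  shows "\<exists>L \<in> carrier_mat Ls (h*w). \<forall>i<Ls. \<forall>j<h*w. (\<lambda>k. X k $$ (i,j)) \<longlonglongrightarrow> L $$ (i,j)"
proof -
  have sigma: "0 < tau / rho" using pos by simp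
  have W: "W \<in> carrier_mat (h*w) (h*w)"
    unfolding W_def by (rule gmm_W_bounds(1)[OF dims(4,5,7) C_psd beta_nonneg beta_sum sigma zero_carrier_vec])
  have M: "M \<in> carrier_mat (h*w) nh" using M_subsampling by auto
  interpret salsa_sharpening Ls "h*w" Lh Lm nh Yh Ym B M "R * E" E "transpose_mat W" rho lambda
    using Yh Ym B M R E W pos gmm_W_rows_bounds[OF dims(4,5,7) C_psd beta_nonneg beta_sum sigma]
    unfolding W_def by unfold_locales auto
  have "\<exists>L \<in> carrier_mat Ls (h*w). mat_tendsto X L"
    by (rule salsa_iterates_convergent[OF init X_step V1_step V2_step _ D1_step[rule_format]
          D2_step[rule_format] D3_step[rule_format]]) (simp add: V3_step)
  then show ?thesis unfolding mat_tendsto_def by auto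
qed

end
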